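(* For every $x\in\mathfrak{sl}_q(2)=V_{2\pi}$, the operators $L_x$, $\iota_x$ and $\mathrm{d}_{\mathrm{Cl}_q}$ on $\mathrm{Cl}_q(\mathfrak{sl}_2)$ satisfy Cartan's magic formula \[ L_x=\iota_x\circ\mathrm{d}_{\mathrm{Cl}_q}+\mathrm{d}_{\mathrm{Cl}_q}\circ\iota_x . \] In particular, the cochain maps $L_x$ are homotopic to $0$ with homotopy $\iota_x$, so $L_x$ induces the zero action on the cohomology of $(\mathrm{Cl}_q(\mathfrak{sl}_2),\mathrm{d}_{\mathrm{Cl}_q})$.
   Context: Fix $q\in\mathbb{C}$ nonzero and not a root of unity. $U_q(\mathfrak{sl}_2)$ is the Hopf algebra generated by $E,F,K,K^{-1}$ with $KE=q^2EK$, $KF=q^{-2}FK$, $KK^{-1}=K^{-1}K=1$, $EF-FE=\frac{K-K^{-1}}{q-q^{-1}}$, coproduct $\Delta E=E\otimes K+1\otimes E$, $\Delta F=F\otimes 1+K^{-1}\otimes F$, $\Delta K^{\pm1}=K^{\pm1}\otimes K^{\pm1}$, antipode $S(E)=-EK^{-1}$, $S(F)=-KF$, $S(K^{\pm1})=K^{\mp1}$. $\mathfrak{sl}_q(2)\subset U_q(\mathfrak{sl}_2)$ is the span of $X=E$, $Z=q^{-2}EF-FE$, $Y=KF$, stable under the left adjoint action $\mathrm{ad}_xy=\sum x_{(1)}yS(x_{(2)})$; it is the 3-dimensional type 1 simple module $V_{2\pi}$, with basis written $v_2=X$, $v_0=Z$, $v_{-2}=Y$. The category of finite-dimensional type 1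 modules is braided via the universal $R$-matrix braiding $\sigma$; the normalised braiding is $\tilde\sigma_{V,W}=\sigma_{V,W}\circ(\sigma_{W,V}\circ\sigma_{V,W})^{-1/2}$. Fix a nonzero $c\in\mathbb{C}[q,q^{-1}]$. $\mathrm{Cl}_q(\mathfrak{sl}_2)$ is the superalgebra (generators odd) generated by $v_2,v_0,v_{-2}$ with relations $v_2v_2=0$, $v_{-2}v_{-2}=0$, $v_0v_2=-q^{-2}v_2v_0$, $v_{-2}v_0=-q^{-2}v_0v_{-2}$, $v_0v_0=\frac{1-q^4}{q^3}v_2v_{-2}+\frac{q^2+1}{q}c$, $v_{-2}v_2=-v_2v_{-2}+\frac{q^2+1}{q^2}c$ (equivalently $T(V_{2\pi})/\langle v\otimes w+\tilde\sigma(v\otimes w)-2\langle v,w\rangle\rangle$ with $\langle v_2,v_{-2}\rangle=c$, $\langle v_0,v_0\rangle=q^{-3}(1+q^2)c$, $\langle v_{-2},v_2\rangle=cq^{-2}$). It is a $U_q(\mathfrak{sl}_2)$-module algebra with action $\triangleright$ induced from $V_{2\pi}$. $[x,y]_{\tilde\sigma}:=(m-(-1)^{p(x)p(y)}m\circ\tilde\sigma)(x\otimes y)$. Operators: Lie derivative $L_x\omega=x\triangleright\omega$; contraction $\iota_x\omega=\frac12[x,\omega]_{\tilde\sigma}$ for $x\in V_{2\pi}$; differential $\mathrm{d}_{\mathrm{Cl}_q}\omega=[\gamma_q,\omega]_{\tilde\sigma}=\gamma_q\omega-(-1)^{p(\omega)}\omega\gamma_q$ where $\gamma_q=-\frac{1}{2c^2}(cv_0+v_2v_0v_{-2})$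 (an element whose square is a scalar). *)

theory Defs
  imports Complex_Main "HOL-Library.Function_Algebras"
begin

text \<open>
  All spaces are finite dimensional and are modelled as coefficient functions
  on a finite basis type: a vector of a space with basis type 'a is a function
  of type 'a => complex.  The parameters q and c of the paper are the complex
  numbers q and cc below.
\<close>

type_synonym 'a vec = "'a \<Rightarrow> complex"

definition bv :: "'a \<Rightarrow> 'a vec" where
  "bv i = (\<lambda>j. if j = i then 1 else 0)"

definition sc :: "complex \<Rightarrow> 'a vec \<Rightarrow> 'a vec" where
  "sc a v = (\<lambda>j. a * v j)"

definition linext :: "('a::finite \<Rightarrow> 'b vec) \<Rightarrow> 'a vec \<Rightarrow> 'b vec" where
  "linext f v = (\<lambda>j. \<Sum>i\<in>UNIV. v i * f i j)"

text \<open>Pure tensors: basis of A \<otimes> B is 'a \<times> 'b.\<close>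
definition tens :: "'a vec \<Rightarrow> 'b vec \<Rightarrow> ('a \<times> 'b) vec" where
  "tens u w = (\<lambda>(i, j). u i * w j)"

text \<open>Basis v_2 = X = E, v_0 = Z = q^-2 EF - FE, v_{-2} = Y = KF.\<close>
datatype gen = Vp | Vz | Vm

lemma UNIV_gen: "(UNIV :: gen set) = {Vp, Vz, Vm}"
  using gen.exhaust by auto

instance gen :: finite
  by standard (simp add: UNIV_gen)

fun wt_gen :: "gen \<Rightarrow> int" where
  "wt_gen Vp = 2" | "wt_gen Vz = 0" | "wt_gen Vm = -2"

text \<open>
  The left adjoint action ad_x y = x_(1) y S(x_(2)) on the basis X, Z, Y
  (computed from the relations of U_q(sl_2)):
    ad_K X = q^2 X,  ad_K Z = Z,  ad_K Y = q^-2 Y,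
    ad_E X = 0,  ad_E Z = -(q + q^-1) X,  ad_E Y = Z,
    ad_F X = -Z, ad_F Z = (q + q^-1) Y,  ad_F Y = 0.
\<close>
fun E_gen :: "complex \<Rightarrow> gen \<Rightarrow> gen vec" where
  "E_gen q Vp = 0"
| "E_gen q Vz = sc (- (q + inverse q)) (bv Vp)"
| "E_gen q Vm = bv Vz"

fun F_gen :: "complex \<Rightarrow> gen \<Rightarrow> gen vec" where
  "F_gen q Vp = sc (-1) (bv Vz)"
| "F_gen q Vz = sc (q + inverse q) (bv Vm)"
| "F_gen q Vm = 0"

definition K_gen :: "complex \<Rightarrow> gen \<Rightarrow> gen vec" where
  "K_gen q g = sc (q powi wt_gen g) (bv g)"

definition Kinv_gen :: "complex \<Rightarrow> gen \<Rightarrow> gen vec" where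
  "Kinv_gen q g = sc (q powi (- wt_gen g)) (bv g)"

definition EV :: "complex \<Rightarrow> gen vec \<Rightarrow> gen vec" where "EV q = linext (E_gen q)"
definition FV :: "complex \<Rightarrow> gen vec \<Rightarrow> gen vec" where "FV q = linext (F_gen q)"

section \<open>The superalgebra Cl_q(sl_2)\<close>

text \<open>
  Cl_q(sl_2) is modelled on its PBW basis of ordered monomials
  v_2^a v_0^b v_{-2}^c with a, b, c in {0,1}; the triple (a,b,c) of booleans
  encodes the monomial.  The algebra structure is given by left multiplication
  by the generators, obtained by rewriting with the defining relations
    v_2 v_2 = 0,  v_{-2} v_{-2} = 0,  v_0 v_2 = -q^-2 v_2 v_0,
    v_{-2} v_0 = -q^-2 v_0 v_{-2},
    v_0 v_0 = (1-q^4)/q^3 v_2 v_{-2} + (q^2+1)/q c,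
    v_{-2} v_2 = - v_2 v_{-2} + (q^2+1)/q^2 c.
\<close>
type_synonym mon = "bool \<times> bool \<times> bool"
type_synonym cl = "mon vec"

definition one_cl :: cl where "one_cl = bv (False, False, False)"

definition gen_cl :: "gen \<Rightarrow> cl" where
  "gen_cl g = bv (g = Vp, g = Vz, g = Vm)"

definition emb :: "gen vec \<Rightarrow> cl" where "emb = linext gen_cl"

definition wt_mon :: "mon \<Rightarrow> int" where
  "wt_mon m = (case m of (a, b, c) \<Rightarrow> 2 * of_bool a - 2 * of_bool c)"

definition par_mon :: "mon \<Rightarrow> nat" where
  "par_mon m = (case m of (a, b, c) \<Rightarrow> (of_bool a + of_bool b + of_bool c) mod 2)"

text \<open>v_2 \<cdot> v_2^a v_0^b v_{-2}^c\<close>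
definition lmul_p_mon :: "mon \<Rightarrow> cl" where
  "lmul_p_mon m = (case m of (a, b, c) \<Rightarrow> if a then 0 else bv (True, b, c))"

text \<open>v_0 \<cdot> v_0^b v_{-2}^c\<close>
definition lmul_z_aux :: "complex \<Rightarrow> complex \<Rightarrow> bool \<Rightarrow> bool \<Rightarrow> cl" where
  "lmul_z_aux q cc b c =
     (if \<not> b then bv (False, True, c)
      else sc ((1 - q^4) / q^3) (if c then 0 else bv (True, False, True))
           + sc ((q^2 + 1) / q * cc) (bv (False, False, c)))"

text \<open>v_0 \<cdot> v_2^a v_0^b v_{-2}^c, using v_0 v_2 = -q^-2 v_2 v_0\<close>
definition lmul_z_mon :: "complex \<Rightarrow> complex \<Rightarrow> mon \<Rightarrow> cl" where
  "lmul_z_mon q cc m = (case m of (a, b, c) \<Rightarrow>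
     if a then sc (- inverse (q^2)) (linext lmul_p_mon (lmul_z_aux q cc b c))
     else lmul_z_aux q cc b c)"

text \<open>v_{-2} \<cdot> v_0^b v_{-2}^c, using v_{-2} v_0 = -q^-2 v_0 v_{-2}\<close>
definition lmul_m_aux :: "complex \<Rightarrow> bool \<Rightarrow> bool \<Rightarrow> cl" where
  "lmul_m_aux q b c =
     (if c then 0
      else if b then sc (- inverse (q^2)) (bv (False, True, True))
      else bv (False, False, True))"

text \<open>v_{-2} \<cdot> v_2^a v_0^b v_{-2}^c, using v_{-2} v_2 = - v_2 v_{-2} + (q^2+1)/q^2 c\<close>
definition lmul_m_mon :: "complex \<Rightarrow> complex \<Rightarrow> mon \<Rightarrow> cl" where
  "lmul_m_mon q cc m = (case m of (a, b, c) \<Rightarrow>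
     if a then sc (-1) (linext lmul_p_mon (lmul_m_aux q b c))
               + sc ((q^2 + 1) / q^2 * cc) (bv (False, b, c))
     else lmul_m_aux q b c)"

fun lmul_mon :: "complex \<Rightarrow> complex \<Rightarrow> gen \<Rightarrow> mon \<Rightarrow> cl" where
  "lmul_mon q cc Vp = lmul_p_mon"
| "lmul_mon q cc Vz = lmul_z_mon q cc"
| "lmul_mon q cc Vm = lmul_m_mon q cc"

definition lmul :: "complex \<Rightarrow> complex \<Rightarrow> gen \<Rightarrow> cl \<Rightarrow> cl" where
  "lmul q cc g = linext (lmul_mon q cc g)"

definition word :: "mon \<Rightarrow> gen list" where
  "word m = (case m of (a, b, c) \<Rightarrow>
     (if a then [Vp] else []) @ (if b then [Vz] else []) @ (if c then [Vm] else []))"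

definition wprod :: "complex \<Rightarrow> complex \<Rightarrow> gen list \<Rightarrow> cl \<Rightarrow> cl" where
  "wprod q cc w v = foldr (lmul q cc) w v"

definition mult :: "complex \<Rightarrow> complex \<Rightarrow> cl \<Rightarrow> cl \<Rightarrow> cl" where
  "mult q cc u v = linext (\<lambda>m. wprod q cc (word m) v) u"

definition even_part :: "cl \<Rightarrow> cl" where
  "even_part v = (\<lambda>m. if par_mon m = 0 then v m else 0)"

definition odd_part :: "cl \<Rightarrow> cl" where
  "odd_part v = (\<lambda>m. if par_mon m = 1 then v m else 0)"

text \<open>
  Induced from V_{2pi} via the coproduct:
  K(ab) = K(a) K(b), E(ab) = E(a) K(b) + a E(b), F(ab) = F(a) b + K^-1(a) F(b),
  and K(1) = 1, E(1) = F(1) = 0.  Defined on words of generators.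
\<close>
fun actK_w :: "complex \<Rightarrow> complex \<Rightarrow> gen list \<Rightarrow> cl" where
  "actK_w q cc [] = one_cl"
| "actK_w q cc (g # w) = mult q cc (emb (K_gen q g)) (actK_w q cc w)"

fun actE_w :: "complex \<Rightarrow> complex \<Rightarrow> gen list \<Rightarrow> cl" where
  "actE_w q cc [] = 0"
| "actE_w q cc (g # w) =
     mult q cc (emb (E_gen q g)) (actK_w q cc w) + lmul q cc g (actE_w q cc w)"

fun actF_w :: "complex \<Rightarrow> complex \<Rightarrow> gen list \<Rightarrow> cl" where
  "actF_w q cc [] = 0"
| "actF_w q cc (g # w) =
     mult q cc (emb (F_gen q g)) (wprod q cc w one_cl)
     + mult q cc (emb (Kinv_gen q g)) (actF_w q cc w)"

definition actK :: "complex \<Rightarrow> complex \<Rightarrow> cl \<Rightarrow> cl" where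
  "actK q cc = linext (\<lambda>m. actK_w q cc (word m))"
definition actE :: "complex \<Rightarrow> complex \<Rightarrow> cl \<Rightarrow> cl" where
  "actE q cc = linext (\<lambda>m. actE_w q cc (word m))"
definition actF :: "complex \<Rightarrow> complex \<Rightarrow> cl \<Rightarrow> cl" where
  "actF q cc = linext (\<lambda>m. actF_w q cc (word m))"

text \<open>
  Lie derivative: for x = x(Vp) X + x(Vz) Z + x(Vm) Y in sl_q(2) \<subseteq> U_q(sl_2),
  L_x w = x \<triangleright> w, where X = E, Z = q^-2 EF - FE, Y = KF.
\<close>
definition Lie :: "complex \<Rightarrow> complex \<Rightarrow> gen vec \<Rightarrow> cl \<Rightarrow> cl" where
  "Lie q cc x w =
     sc (x Vp) (actE q cc w)
   + sc (x Vz) (sc (inverse (q^2)) (actE q cc (actF q cc w)) - actF q cc (actE q cc w))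
   + sc (x Vm) (actK q cc (actF q cc w))"

section \<open>Braiding\<close>

definition qint :: "complex \<Rightarrow> nat \<Rightarrow> complex" where
  "qint q n = (q ^ n - inverse q ^ n) / (q - inverse q)"

definition qfact :: "complex \<Rightarrow> nat \<Rightarrow> complex" where
  "qfact q n = (\<Prod>k = 1..n. qint q k)"

text \<open>
  Coefficients of the universal R-matrix for the coproduct
  Delta E = E \<otimes> K + 1 \<otimes> E, Delta F = F \<otimes> 1 + K^-1 \<otimes> F:
  R = q^{H \<otimes> H/2} \<Sum>_n q^{n(n-1)/2} (q - q^-1)^n / [n]_q! E^n \<otimes> F^n.
\<close>
definition Rcoef :: "complex \<Rightarrow> nat \<Rightarrow> complex" where
  "Rcoef q n = q powi (int (n * (n - 1) div 2)) * (q - inverse q) ^ n / qfact q n"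

text \<open>
  Braiding sigma_{A,B} = flip \<circ> R : A \<otimes> B \<rightarrow> B \<otimes> A for finite dimensional
  type 1 modules A, B given by a weight basis (weights wA, wB; K acts by
  q^weight), and the actions EA of E on A and FB of F on B.  On a finite
  dimensional type 1 module E is nilpotent with E^(dim A) = 0, so the sum over
  n < CARD('a) is the full R-matrix action.
\<close>
definition braid ::
  "complex \<Rightarrow> ('a::finite \<Rightarrow> int) \<Rightarrow> ('a vec \<Rightarrow> 'a vec) \<Rightarrow>
   ('b::finite \<Rightarrow> int) \<Rightarrow> ('b vec \<Rightarrow> 'b vec) \<Rightarrow> ('a \<times> 'b) vec \<Rightarrow> ('b \<times> 'a) vec" where
  "braid q wA EA wB FB =
     linext (\<lambda>(i, j). \<lambda>(l, k). \<Sum>n<card (UNIV :: 'a set).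
        Rcoef q n * q powi ((wA k * wB l) div 2) * (EA ^^ n) (bv i) k * (FB ^^ n) (bv j) l)"

text \<open>
  (T)^(-1/2) for a diagonalizable operator T whose eigenvalues are of the form
  q^(2k), k \<in> \<int> (as is the double braiding on finite dimensional type 1
  modules): the linear operator acting by q^(-k) on the q^(2k)-eigenspace.
\<close>
definition inv_sqrt :: "complex \<Rightarrow> (('a::finite) vec \<Rightarrow> 'a vec) \<Rightarrow> 'a vec \<Rightarrow> 'a vec" where
  "inv_sqrt q T = (THE S. (\<exists>f. S = linext f) \<and>
      (\<forall>k::int. \<forall>v. T v = sc (q powi (2 * k)) v \<longrightarrow> S v = sc (q powi (- k)) v))"

definition sigma_VCl :: "complex \<Rightarrow> complex \<Rightarrow> (gen \<times> mon) vec \<Rightarrow> (mon \<times> gen) vec" where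
  "sigma_VCl q cc = braid q wt_gen (EV q) wt_mon (actF q cc)"

definition sigma_ClV :: "complex \<Rightarrow> complex \<Rightarrow> (mon \<times> gen) vec \<Rightarrow> (gen \<times> mon) vec" where
  "sigma_ClV q cc = braid q wt_mon (actE q cc) wt_gen (FV q)"

definition nsigma_VCl :: "complex \<Rightarrow> complex \<Rightarrow> (gen \<times> mon) vec \<Rightarrow> (mon \<times> gen) vec" where
  "nsigma_VCl q cc =
     sigma_VCl q cc \<circ> inv_sqrt q (sigma_ClV q cc \<circ> sigma_VCl q cc)"

definition mult_ClV :: "complex \<Rightarrow> complex \<Rightarrow> (mon \<times> gen) vec \<Rightarrow> cl" where
  "mult_ClV q cc = linext (\<lambda>(m, g). mult q cc (bv m) (gen_cl g))"

text \<open>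
  iota_x w = 1/2 [x, w]_{tilde sigma}, with x odd:
  [x, w] = x w - (-1)^{p(w)} m(tilde sigma(x \<otimes> w)) on homogeneous w,
  extended linearly.
\<close>
definition iota :: "complex \<Rightarrow> complex \<Rightarrow> gen vec \<Rightarrow> cl \<Rightarrow> cl" where
  "iota q cc x w = sc (1/2)
     (mult q cc (emb x) w
      - mult_ClV q cc (nsigma_VCl q cc (tens x (even_part w)))
      + mult_ClV q cc (nsigma_VCl q cc (tens x (odd_part w))))"

definition gamma_q :: "complex \<Rightarrow> complex \<Rightarrow> cl" where
  "gamma_q q cc = sc (- 1 / (2 * cc^2))
     (sc cc (gen_cl Vz)
      + mult q cc (gen_cl Vp) (mult q cc (gen_cl Vz) (gen_cl Vm)))"

definition dCl :: "complex \<Rightarrow> complex \<Rightarrow> cl \<Rightarrow> cl" where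
  "dCl q cc w = mult q cc (gamma_q q cc) w
     - mult q cc (even_part w) (gamma_q q cc)
     + mult q cc (odd_part w) (gamma_q q cc)"

end

theory Submission
  imports Defs
begin

text \<open>
  All spaces involved are finite dimensional: \<open>Cl\<^sub>q(sl\<^sub>2)\<close> has the 8-element PBW basis and
  \<open>V\<^sub>2\<^sub>\<pi> \<otimes> Cl\<^sub>q(sl\<^sub>2)\<close> a 24-element basis, so every operator in the statement is an explicit
  matrix over \<open>\<rat>(q, c)\<close>.  The only ingredient that is not a finite computation is the
  normalised braiding, which involves the inverse square root of the double braiding
  \<open>\<sigma>\<^sub>C\<^sub>l\<^sub>,\<^sub>V \<sigma>\<^sub>V\<^sub>,\<^sub>C\<^sub>l\<close>.  We diagonalise the double braiding explicitly; its eigenvalues are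
  \<open>q\<^sup>-\<^sup>8, q\<^sup>-\<^sup>4, 1, q\<^sup>4\<close>, pairwise distinct because \<open>q\<close> is not a root of unity, so its inverse
  square root is the operator acting by \<open>q\<^sup>4, q\<^sup>2, 1, q\<^sup>-\<^sup>2\<close> on the eigenspaces.  With \<open>\<iota>\<^sub>x\<close>
  computed in this way, Cartan's formula \<open>L\<^sub>x = \<iota>\<^sub>x d + d \<iota>\<^sub>x\<close> is a matrix identity, and the other
  two claims follow formally from it, since \<open>d\<close> is additive with \<open>d\<^sup>2 = 0\<close>.
\<close>

section \<open>Coordinates\<close>

definition mk_cl ::
  "complex \<Rightarrow> complex \<Rightarrow> complex \<Rightarrow> complex \<Rightarrow> complex \<Rightarrow> complex \<Rightarrow> complex \<Rightarrow> complex \<Rightarrow> cl"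
where
  "mk_cl a0 a1 a2 a3 a4 a5 a6 a7 = (\<lambda>(x, y, z).
     if x then (if y then (if z then a7 else a6) else (if z then a5 else a4))
     else (if y then (if z then a3 else a2) else (if z then a1 else a0)))"

lemma mk_cl_apply [simp]:
  "mk_cl a0 a1 a2 a3 a4 a5 a6 a7 (False,False,False) = a0"
  "mk_cl a0 a1 a2 a3 a4 a5 a6 a7 (False,False,True) = a1"
  "mk_cl a0 a1 a2 a3 a4 a5 a6 a7 (False,True,False) = a2"
  "mk_cl a0 a1 a2 a3 a4 a5 a6 a7 (False,True,True) = a3"
  "mk_cl a0 a1 a2 a3 a4 a5 a6 a7 (True,False,False) = a4"
  "mk_cl a0 a1 a2 a3 a4 a5 a6 a7 (True,False,True) = a5"
  "mk_cl a0 a1 a2 a3 a4 a5 a6 a7 (True,True,False) = a6"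
  "mk_cl a0 a1 a2 a3 a4 a5 a6 a7 (True,True,True) = a7"
  by (simp_all add: mk_cl_def)

lemma cl_eta:
  "(v::cl) = mk_cl (v (False,False,False)) (v (False,False,True)) (v (False,True,False))
     (v (False,True,True)) (v (True,False,False)) (v (True,False,True)) (v (True,True,False))
     (v (True,True,True))"
  by (rule ext) (auto simp: mk_cl_def)

lemma mk_cl_eq_iff:
  "mk_cl a0 a1 a2 a3 a4 a5 a6 a7 = mk_cl b0 b1 b2 b3 b4 b5 b6 b7 \<longleftrightarrow>
   a0 = b0 \<and> a1 = b1 \<and> a2 = b2 \<and> a3 = b3 \<and> a4 = b4 \<and> a5 = b5 \<and> a6 = b6 \<and> a7 = b7"
  by (metis mk_cl_apply)

lemma mk_cl_add [simp]:
  "mk_cl a0 a1 a2 a3 a4 a5 a6 a7 + mk_cl b0 b1 b2 b3 b4 b5 b6 b7 =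
   mk_cl (a0+b0) (a1+b1) (a2+b2) (a3+b3) (a4+b4) (a5+b5) (a6+b6) (a7+b7)"
  by (rule ext) (auto simp: mk_cl_def)

lemma mk_cl_diff [simp]:
  "mk_cl a0 a1 a2 a3 a4 a5 a6 a7 - mk_cl b0 b1 b2 b3 b4 b5 b6 b7 =
   mk_cl (a0-b0) (a1-b1) (a2-b2) (a3-b3) (a4-b4) (a5-b5) (a6-b6) (a7-b7)"
  by (rule ext) (auto simp: mk_cl_def)

lemma sc_mk_cl [simp]:
  "sc c (mk_cl a0 a1 a2 a3 a4 a5 a6 a7) =
   mk_cl (c*a0) (c*a1) (c*a2) (c*a3) (c*a4) (c*a5) (c*a6) (c*a7)"
  by (rule ext) (auto simp: mk_cl_def sc_def)

lemma zero_cl_eq_mk_cl: "(0::cl) = mk_cl 0 0 0 0 0 0 0 0"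
  by (rule ext) (auto simp: mk_cl_def)

lemma bv_mon_eq_mk_cl:
  "bv (False,False,False) = mk_cl 1 0 0 0 0 0 0 0"
  "bv (False,False,True) = mk_cl 0 1 0 0 0 0 0 0"
  "bv (False,True,False) = mk_cl 0 0 1 0 0 0 0 0"
  "bv (False,True,True) = mk_cl 0 0 0 1 0 0 0 0"
  "bv (True,False,False) = mk_cl 0 0 0 0 1 0 0 0"
  "bv (True,False,True) = mk_cl 0 0 0 0 0 1 0 0"
  "bv (True,True,False) = mk_cl 0 0 0 0 0 0 1 0"
  "bv (True,True,True) = mk_cl 0 0 0 0 0 0 0 1"
  by (rule ext, auto simp: mk_cl_def bv_def split: if_splits)+

lemma UNIV_mon:
  "(UNIV :: mon set) =
     {(False,False,False), (False,False,True), (False,True,False), (False,True,True),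
      (True,False,False), (True,False,True), (True,True,False), (True,True,True)}"
  by auto

lemma card_UNIV_mon: "card (UNIV :: mon set) = 8"
  by (simp add: UNIV_mon)

lemma card_UNIV_gen: "card (UNIV :: gen set) = 3"
  by (simp add: UNIV_gen)

lemma sum_UNIV_mon:
  "(\<Sum>m\<in>UNIV. f m) = f (False,False,False) + f (False,False,True) + f (False,True,False)
     + f (False,True,True) + f (True,False,False) + f (True,False,True) + f (True,True,False)
     + f (True,True,True)"
  by (simp add: UNIV_mon add.assoc)

lemma sum_UNIV_gen: "(\<Sum>g\<in>UNIV. f g) = f Vp + f Vz + f Vm"
  by (simp add: UNIV_gen add.assoc)

lemma linext_mk_cl:
  "linext f (mk_cl a0 a1 a2 a3 a4 a5 a6 a7) =
     sc a0 (f (False,False,False)) + sc a1 (f (False,False,True)) + sc a2 (f (False,True,False))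
   + sc a3 (f (False,True,True)) + sc a4 (f (True,False,False)) + sc a5 (f (True,False,True))
   + sc a6 (f (True,True,False)) + sc a7 (f (True,True,True))"
  by (rule ext) (simp add: linext_def sum_UNIV_mon sc_def)

lemma even_part_mk_cl: "even_part (mk_cl a0 a1 a2 a3 a4 a5 a6 a7) = mk_cl a0 0 0 a3 0 a5 a6 0"
  by (rule ext) (auto simp: even_part_def mk_cl_def par_mon_def)

lemma odd_part_mk_cl: "odd_part (mk_cl a0 a1 a2 a3 a4 a5 a6 a7) = mk_cl 0 a1 a2 0 a4 0 0 a7"
  by (rule ext) (auto simp: odd_part_def mk_cl_def par_mon_def)

definition mk_V :: "complex \<Rightarrow> complex \<Rightarrow> complex \<Rightarrow> gen vec" where
  "mk_V a b c = (\<lambda>g. case g of Vp \<Rightarrow> a | Vz \<Rightarrow> b | Vm \<Rightarrow> c)"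

lemma mk_V_apply [simp]: "mk_V a b c Vp = a" "mk_V a b c Vz = b" "mk_V a b c Vm = c"
  by (simp_all add: mk_V_def)

lemma V_eta: "(v::gen vec) = mk_V (v Vp) (v Vz) (v Vm)"
  by (rule ext) (simp add: mk_V_def split: gen.split)

lemma mk_V_eq_iff: "mk_V a b c = mk_V a' b' c' \<longleftrightarrow> a = a' \<and> b = b' \<and> c = c'"
  by (metis mk_V_apply)

lemma mk_V_add [simp]: "mk_V a b c + mk_V a' b' c' = mk_V (a+a') (b+b') (c+c')"
  by (rule ext) (simp add: mk_V_def split: gen.split)

lemma sc_mk_V [simp]: "sc d (mk_V a b c) = mk_V (d*a) (d*b) (d*c)"
  by (rule ext) (simp add: mk_V_def sc_def split: gen.split)

lemma zero_V_eq_mk_V: "(0::gen vec) = mk_V 0 0 0"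
  by (rule ext) (simp add: mk_V_def split: gen.split)

lemma bv_gen_eq_mk_V: "bv Vp = mk_V 1 0 0" "bv Vz = mk_V 0 1 0" "bv Vm = mk_V 0 0 1"
  by (rule ext, simp add: mk_V_def bv_def split: gen.split)+

lemma linext_mk_V: "linext f (mk_V a b c) = sc a (f Vp) + sc b (f Vz) + sc c (f Vm)"
  by (rule ext) (simp add: linext_def sum_UNIV_gen sc_def)

definition mk_VCl :: "cl \<Rightarrow> cl \<Rightarrow> cl \<Rightarrow> (gen \<times> mon) vec" where
  "mk_VCl A B C = (\<lambda>(g, m). case g of Vp \<Rightarrow> A m | Vz \<Rightarrow> B m | Vm \<Rightarrow> C m)"

definition mk_ClV :: "cl \<Rightarrow> cl \<Rightarrow> cl \<Rightarrow> (mon \<times> gen) vec" where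
  "mk_ClV A B C = (\<lambda>(m, g). case g of Vp \<Rightarrow> A m | Vz \<Rightarrow> B m | Vm \<Rightarrow> C m)"

lemma mk_VCl_apply [simp]:
  "mk_VCl A B C (Vp,m) = A m" "mk_VCl A B C (Vz,m) = B m" "mk_VCl A B C (Vm,m) = C m"
  by (simp_all add: mk_VCl_def)

lemma mk_ClV_apply [simp]:
  "mk_ClV A B C (m,Vp) = A m" "mk_ClV A B C (m,Vz) = B m" "mk_ClV A B C (m,Vm) = C m"
  by (simp_all add: mk_ClV_def)

lemma mk_VCl_add [simp]: "mk_VCl A B C + mk_VCl A' B' C' = mk_VCl (A+A') (B+B') (C+C')"
  by (rule ext) (auto simp: mk_VCl_def split: gen.split)

lemma sc_mk_VCl [simp]: "sc d (mk_VCl A B C) = mk_VCl (sc d A) (sc d B) (sc d C)"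
  by (rule ext) (auto simp: mk_VCl_def sc_def split: gen.split)

lemma mk_ClV_add [simp]: "mk_ClV A B C + mk_ClV A' B' C' = mk_ClV (A+A') (B+B') (C+C')"
  by (rule ext) (auto simp: mk_ClV_def split: gen.split)

lemma sc_mk_ClV [simp]: "sc d (mk_ClV A B C) = mk_ClV (sc d A) (sc d B) (sc d C)"
  by (rule ext) (auto simp: mk_ClV_def sc_def split: gen.split)

lemma mk_VCl_eq_iff: "mk_VCl A B C = mk_VCl A' B' C' \<longleftrightarrow> A = A' \<and> B = B' \<and> C = C'"
  by (metis mk_VCl_apply ext)

lemma mk_ClV_eq_iff: "mk_ClV A B C = mk_ClV A' B' C' \<longleftrightarrow> A = A' \<and> B = B' \<and> C = C'"
  by (metis mk_ClV_apply ext)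

lemma VCl_eta: "(v::(gen \<times> mon) vec)
                = mk_VCl
                    (mk_cl (v (Vp,False,False,False)) (v (Vp,False,False,True))
                       (v (Vp,False,True,False)) (v (Vp,False,True,True)) (v (Vp,True,False,False))
                       (v (Vp,True,False,True)) (v (Vp,True,True,False)) (v (Vp,True,True,True)))
                    (mk_cl (v (Vz,False,False,False)) (v (Vz,False,False,True))
                       (v (Vz,False,True,False)) (v (Vz,False,True,True)) (v (Vz,True,False,False))
                       (v (Vz,True,False,True)) (v (Vz,True,True,False)) (v (Vz,True,True,True)))
                    (mk_cl (v (Vm,False,False,False)) (v (Vm,False,False,True))
                       (v (Vm,False,True,False)) (v (Vm,False,True,True)) (v (Vm,True,False,False))
                       (v (Vm,True,False,True)) (v (Vm,True,True,False)) (v (Vm,True,True,True)))"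
  by (rule ext) (auto simp: mk_cl_def mk_VCl_def mk_ClV_def split: gen.split)

lemma ClV_eta: "(v::(mon \<times> gen) vec)
                = mk_ClV
                    (mk_cl (v ((False,False,False),Vp)) (v ((False,False,True),Vp))
                       (v ((False,True,False),Vp)) (v ((False,True,True),Vp))
                       (v ((True,False,False),Vp)) (v ((True,False,True),Vp))
                       (v ((True,True,False),Vp)) (v ((True,True,True),Vp)))
                    (mk_cl (v ((False,False,False),Vz)) (v ((False,False,True),Vz))
                       (v ((False,True,False),Vz)) (v ((False,True,True),Vz))
                       (v ((True,False,False),Vz)) (v ((True,False,True),Vz))
                       (v ((True,True,False),Vz)) (v ((True,True,True),Vz)))
                    (mk_cl (v ((False,False,False),Vm)) (v ((False,False,True),Vm))
                       (v ((False,True,False),Vm)) (v ((False,True,True),Vm))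
                       (v ((True,False,False),Vm)) (v ((True,False,True),Vm))
                       (v ((True,True,False),Vm)) (v ((True,True,True),Vm)))"
  by (rule ext) (auto simp: mk_cl_def mk_VCl_def mk_ClV_def split: gen.split)

lemma sum_UNIV_gen_mon:
  "(\<Sum>x\<in>UNIV. f x) = (\<Sum>m\<in>UNIV. f (Vp,m)) + (\<Sum>m\<in>UNIV. f (Vz,m)) + (\<Sum>m\<in>UNIV. f (Vm,m))"
proof -
  have "(\<Sum>x\<in>UNIV. f x) = (\<Sum>g\<in>UNIV. \<Sum>m\<in>UNIV. f (g,m))"
    by (simp add: UNIV_Times_UNIV[symmetric] sum.cartesian_product del: UNIV_Times_UNIV)
  then show ?thesis
    by (simp add: sum_UNIV_gen)
qed

lemma sum_UNIV_mon_gen: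
  "(\<Sum>x\<in>UNIV. f x) = (\<Sum>m\<in>UNIV. f (m,Vp)) + (\<Sum>m\<in>UNIV. f (m,Vz)) + (\<Sum>m\<in>UNIV. f (m,Vm))"
proof -
  have "(\<Sum>x\<in>UNIV. f x) = (\<Sum>m\<in>UNIV. \<Sum>g\<in>UNIV. f (m,g))"
    by (simp add: UNIV_Times_UNIV[symmetric] sum.cartesian_product del: UNIV_Times_UNIV)
  then show ?thesis
    by (simp add: sum_UNIV_gen sum.distrib)
qed

lemma linext_mk_VCl:
  "linext f (mk_VCl A B C) =
   linext (\<lambda>m. f (Vp,m)) A + linext (\<lambda>m. f (Vz,m)) B + linext (\<lambda>m. f (Vm,m)) C"
  by (rule ext) (simp add: linext_def sum_UNIV_gen_mon)

lemma linext_mk_ClV: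
  "linext f (mk_ClV A B C) =
   linext (\<lambda>m. f (m,Vp)) A + linext (\<lambda>m. f (m,Vz)) B + linext (\<lambda>m. f (m,Vm)) C"
  by (rule ext) (simp add: linext_def sum_UNIV_mon_gen)

lemma tens_mk_V: "tens (mk_V a b c) w = mk_VCl (sc a w) (sc b w) (sc c w)"
  by (rule ext) (auto simp: tens_def mk_VCl_def sc_def split: gen.split)

lemma cl_cases: "(\<And>a0 a1 a2 a3 a4 a5 a6 a7. P (mk_cl a0 a1 a2 a3 a4 a5 a6 a7)) \<Longrightarrow> P v"
  by (subst cl_eta) assumption

lemma V_cases: "(\<And>x0 x1 x2. P (mk_V x0 x1 x2)) \<Longrightarrow> P v"
  by (subst V_eta) assumption

lemma VCl_cases:
  "(\<And>a0 a1 a2 a3 a4 a5 a6 a7 b0 b1 b2 b3 b4 b5 b6 b7 c0 c1 c2 c3 c4 c5 c6 c7.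
      P (mk_VCl (mk_cl a0 a1 a2 a3 a4 a5 a6 a7) (mk_cl b0 b1 b2 b3 b4 b5 b6 b7)
           (mk_cl c0 c1 c2 c3 c4 c5 c6 c7)))
   \<Longrightarrow> P v"
  by (subst VCl_eta) assumption

lemma bv_gen_mon_eq_mk_VCl:
  "bv (Vp,m) = mk_VCl (bv m) 0 0" "bv (Vz,m) = mk_VCl 0 (bv m) 0" "bv (Vm,m) = mk_VCl 0 0 (bv m)"
  by (rule ext, simp add: bv_def mk_VCl_def split: prod.split gen.split)+

lemma linext_bv: "linext f (bv i) = f i"
proof (rule ext)
  fix j
  have "(\<Sum>k\<in>UNIV. bv i k * f k j) = (\<Sum>k\<in>UNIV. if k = i then f i j else 0)"
    by (rule sum.cong) (auto simp: bv_def)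
  then show "linext f (bv i) j = f i j"
    by (simp add: linext_def)
qed

lemma sum_fun_apply: "(\<Sum>b\<in>A. f b) x = (\<Sum>b\<in>A. (f b x :: complex))"
  by (induction A rule: infinite_finite_induct) auto

definition pairing :: "'a::finite vec \<Rightarrow> 'a vec \<Rightarrow> complex" where
  "pairing \<phi> v = (\<Sum>i\<in>UNIV. \<phi> i * v i)"

lemma pairing_sc: "pairing \<phi> (sc a v) = a * pairing \<phi> v"
  by (simp add: pairing_def sc_def sum_distrib_left mult.left_commute)

text \<open>
  The hypothesis \<open>complete\<close> below says \<open>\<Sum>\<^sub>b e\<^sub>b \<phi>\<^sub>b\<^sup>T = id\<close>, i.e. the \<open>e\<^sub>b\<close> form a basis with
  dual basis \<open>\<phi>\<^sub>b\<close>.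
\<close>

lemma dual_basis_expansion:
  fixes e \<phi> :: "'b::finite \<Rightarrow> 'a::finite vec"
  assumes complete: "\<And>i. (\<Sum>b\<in>UNIV. sc (\<phi> b i) (e b)) = bv i"
  shows "v j = (\<Sum>b\<in>UNIV. pairing (\<phi> b) v * e b j)"
proof -
  have \<phi>e: "(\<Sum>b\<in>UNIV. \<phi> b i * e b j) = bv i j" for i
    using fun_cong[OF complete[of i], of j] by (simp add: sum_fun_apply sc_def)
  have "(\<Sum>b\<in>UNIV. pairing (\<phi> b) v * e b j) = (\<Sum>b\<in>UNIV. \<Sum>i\<in>UNIV. v i * (\<phi> b i * e b j))"
    by (simp add: pairing_def sum_distrib_left sum_distrib_right mult_ac)
  also have "\<dots> = (\<Sum>i\<in>UNIV. v i * (\<Sum>b\<in>UNIV. \<phi> b i * e b j))"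
    by (subst sum.swap) (simp add: sum_distrib_left)
  also have "\<dots> = (\<Sum>i\<in>UNIV. v i * bv i j)"
    by (simp add: \<phi>e)
  also have "\<dots> = (\<Sum>i\<in>UNIV. if i = j then v j else 0)"
    by (rule sum.cong) (auto simp: bv_def)
  finally show ?thesis
    by simp
qed

lemma linext_dual_basis_expansion:
  fixes e \<phi> :: "'b::finite \<Rightarrow> 'a::finite vec"
  assumes complete: "\<And>i. (\<Sum>b\<in>UNIV. sc (\<phi> b i) (e b)) = bv i"
  shows "linext f v j = (\<Sum>b\<in>UNIV. pairing (\<phi> b) v * linext f (e b) j)"
proof -
  have "linext f v j = (\<Sum>i\<in>UNIV. (\<Sum>b\<in>UNIV. pairing (\<phi> b) v * e b i) * f i j)"
    unfolding linext_def
    by (rule sum.cong) (auto simp: dual_basis_expansion[OF complete, symmetric])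
  also have "\<dots> = (\<Sum>b\<in>UNIV. \<Sum>i\<in>UNIV. pairing (\<phi> b) v * (e b i * f i j))"
    by (simp add: sum_distrib_right mult.assoc) (rule sum.swap)
  also have "\<dots> = (\<Sum>b\<in>UNIV. pairing (\<phi> b) v * linext f (e b) j)"
    by (simp add: linext_def sum_distrib_left)
  finally show ?thesis .
qed

definition spectral_op ::
  "('b::finite \<Rightarrow> 'a::finite vec) \<Rightarrow> ('b \<Rightarrow> 'a vec) \<Rightarrow> ('b \<Rightarrow> complex) \<Rightarrow> 'a vec \<Rightarrow> 'a vec"
where
  "spectral_op e \<phi> \<mu> = linext (\<lambda>i. \<Sum>b\<in>UNIV. sc (\<phi> b i * \<mu> b) (e b))"

lemma spectral_op_apply:
  "spectral_op e \<phi> \<mu> v j = (\<Sum>b\<in>UNIV. pairing (\<phi> b) v * \<mu> b * e b j)"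
proof -
  have "spectral_op e \<phi> \<mu> v j = (\<Sum>i\<in>UNIV. \<Sum>b\<in>UNIV. v i * (\<phi> b i * \<mu> b * e b j))"
    by (simp add: spectral_op_def linext_def sum_fun_apply sc_def sum_distrib_left)
  also have "\<dots> = (\<Sum>b\<in>UNIV. \<Sum>i\<in>UNIV. (\<phi> b i * v i) * (\<mu> b * e b j))"
    by (subst sum.swap) (simp add: mult.commute mult.left_commute)
  also have "\<dots> = (\<Sum>b\<in>UNIV. pairing (\<phi> b) v * \<mu> b * e b j)"
    by (simp add: pairing_def sum_distrib_right mult.assoc)
  finally show ?thesis .
qed

lemma linext_eq_spectral_op:
  fixes e \<phi> :: "'b::finite \<Rightarrow> 'a::finite vec"
  assumes complete: "\<And>i. (\<Sum>b\<in>UNIV. sc (\<phi> b i) (e b)) = bv i"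
    and eigen: "\<And>b. linext f (e b) = sc (\<mu> b) (e b)"
  shows "linext f = spectral_op e \<phi> \<mu>"
proof (intro ext)
  fix v j
  have "linext f v j = (\<Sum>b\<in>UNIV. pairing (\<phi> b) v * linext f (e b) j)"
    by (rule linext_dual_basis_expansion[OF complete])
  also have "\<dots> = spectral_op e \<phi> \<mu> v j"
    by (simp add: eigen spectral_op_apply sc_def mult.assoc)
  finally show "linext f v j = spectral_op e \<phi> \<mu> v j" .
qed

lemma spectral_op_eigenvector:
  fixes e \<phi> :: "'b::finite \<Rightarrow> 'a::finite vec" and \<kappa> :: "'b \<Rightarrow> int"
  assumes inj: "\<And>k k'. q powi (2*k) = q powi (2*k') \<Longrightarrow> k = k'"
    and left_eigen: "\<And>b v. pairing (\<phi> b) (T v) = q powi (2 * \<kappa> b) * pairing (\<phi> b) v"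
    and complete: "\<And>i. (\<Sum>b\<in>UNIV. sc (\<phi> b i) (e b)) = bv i"
    and eigen: "T v = sc (q powi (2 * k)) v"
  shows "spectral_op e \<phi> (\<lambda>b. q powi (- \<kappa> b)) v = sc (q powi (- k)) v"
proof (rule ext)
  fix j
  have same_exp: "pairing (\<phi> b) v * q powi (- \<kappa> b) = pairing (\<phi> b) v * q powi (- k)" for b
  proof -
    have "q powi (2 * k) * pairing (\<phi> b) v = q powi (2 * \<kappa> b) * pairing (\<phi> b) v"
      using left_eigen[of b v] by (simp add: eigen pairing_sc)
    then have "pairing (\<phi> b) v = 0 \<or> q powi (2 * k) = q powi (2 * \<kappa> b)"
      by auto
    then show ?thesis
      using inj by auto
  qed
  have "spectral_op e \<phi> (\<lambda>b. q powi (- \<kappa> b)) v j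
        = (\<Sum>b\<in>UNIV. q powi (- k) * (pairing (\<phi> b) v * e b j))"
    unfolding spectral_op_apply by (rule sum.cong) (simp_all add: same_exp mult_ac)
  also have "\<dots> = q powi (- k) * v j"
    by (simp add: sum_distrib_left[symmetric] dual_basis_expansion[OF complete, symmetric])
  finally show "spectral_op e \<phi> (\<lambda>b. q powi (- \<kappa> b)) v j = sc (q powi (- k)) v j"
    by (simp add: sc_def)
qed

lemma inv_sqrt_eq_spectral_op:
  fixes e \<phi> :: "'b::finite \<Rightarrow> 'a::finite vec" and \<kappa> :: "'b \<Rightarrow> int"
  assumes inj: "\<And>k k'. q powi (2*k) = q powi (2*k') \<Longrightarrow> k = k'"
    and eigen: "\<And>b. T (e b) = sc (q powi (2 * \<kappa> b)) (e b)"
    and left_eigen: "\<And>b v. pairing (\<phi> b) (T v) = q powi (2 * \<kappa> b) * pairing (\<phi> b) v"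
    and complete: "\<And>i. (\<Sum>b\<in>UNIV. sc (\<phi> b i) (e b)) = bv i"
  shows "inv_sqrt q T = spectral_op e \<phi> (\<lambda>b. q powi (- \<kappa> b))"
  unfolding inv_sqrt_def
proof (rule the_equality)
  show "(\<exists>f. spectral_op e \<phi> (\<lambda>b. q powi (- \<kappa> b)) = linext f) \<and>
    (\<forall>k v. T v = sc (q powi (2 * k)) v \<longrightarrow>
       spectral_op e \<phi> (\<lambda>b. q powi (- \<kappa> b)) v = sc (q powi (- k)) v)"
    using spectral_op_eigenvector[OF inj left_eigen complete] by (auto simp: spectral_op_def)
next
  fix S
  assume S: "(\<exists>f. S = linext f) \<and> (\<forall>k v. T v = sc (q powi (2 * k)) v \<longrightarrow> S v = sc (q powi (- k)) v)"
  then obtain f where f: "S = linext f"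
    by blast
  have "linext f (e b) = sc (q powi (- \<kappa> b)) (e b)" for b
    using S eigen[of b] by (simp add: f)
  then show "S = spectral_op e \<phi> (\<lambda>b. q powi (- \<kappa> b))"
    unfolding f by (rule linext_eq_spectral_op[OF complete])
qed

lemma homotopy_formula_consequences:
  fixes d :: "'a::ab_group_add \<Rightarrow> 'a"
  assumes homotopy: "\<And>w. L w = i (d w) + d (i w)"
    and d_add: "\<And>v w. d (v + w) = d v + d w"
    and d_d: "\<And>w. d (d w) = 0"
    and i_zero: "i 0 = 0"
  shows "d (L w) = L (d w)" and "d w = 0 \<Longrightarrow> L w = d (i w)"
proof -
  show "d (L w) = L (d w)"
    by (simp add: homotopy d_add d_d i_zero)
  show "L w = d (i w)" if "d w = 0"
    using homotopy[of w] by (simp add: that i_zero)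
qed

definition braid_entry ::
  "complex \<Rightarrow> ('a::finite \<Rightarrow> int) \<Rightarrow> ('a vec \<Rightarrow> 'a vec) \<Rightarrow>
   ('b::finite \<Rightarrow> int) \<Rightarrow> ('b vec \<Rightarrow> 'b vec) \<Rightarrow> 'a \<times> 'b \<Rightarrow> ('b \<times> 'a) vec"
where
  "braid_entry q wA EA wB FB = (\<lambda>(i, j). \<lambda>(l, k). \<Sum>n<card (UNIV :: 'a set).
     Rcoef q n * q powi ((wA k * wB l) div 2) * (EA ^^ n) (bv i) k * (FB ^^ n) (bv j) l)"

lemma braid_eq_linext_entry: "braid q wA EA wB FB = linext (braid_entry q wA EA wB FB)"
  by (simp add: braid_def braid_entry_def)

lemma braid_entry_truncate:
  fixes wA :: "'a::finite \<Rightarrow> int" and wB :: "'b::finite \<Rightarrow> int"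
  assumes nilpotent: "\<And>v. (FB ^^ N) v = 0" and "N \<le> card (UNIV :: 'a set)"
  shows "braid_entry q wA EA wB FB (i, j) (l, k) =
    (\<Sum>n<N. Rcoef q n * q powi ((wA k * wB l) div 2) * (EA ^^ n) (bv i) k * (FB ^^ n) (bv j) l)"
proof -
  let ?h = "\<lambda>n. Rcoef q n * q powi ((wA k * wB l) div 2) * (EA ^^ n) (bv i) k * (FB ^^ n) (bv j) l"
  have "(\<Sum>n<card (UNIV :: 'a set). ?h n) = (\<Sum>n<N. ?h n) + (\<Sum>n\<in>{N..<card (UNIV :: 'a set)}. ?h n)"
    using assms(2)
    by (metis (no_types, lifting) lessThan_atLeast0 sum.atLeastLessThan_concat zero_le)
  moreover have "(FB ^^ n) v = 0" if "N \<le> n" for n v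
  proof -
    have "(FB ^^ n) v = (FB ^^ N) ((FB ^^ (n - N)) v)"
      using that by (metis funpow_add le_add_diff_inverse comp_apply)
    then show ?thesis
      by (simp add: nilpotent)
  qed
  ultimately show ?thesis
    by (simp add: braid_entry_def)
qed

lemma funpow_0_1_2: "(f ^^ 0) x = x" "(f ^^ 1) x = f x" "(f ^^ 2) x = f (f x)"
  by (simp_all add: numeral_2_eq_2)

lemma sum_lessThan_3: "(\<Sum>n<(3::nat). h n) = h 0 + h 1 + h 2"
  by (simp add: numeral_3_eq_3 lessThan_Suc numeral_2_eq_2 add_ac)

text \<open>
  The denominators \<open>s = q\<^sup>2 + 1\<close>, \<open>u = q\<^sup>4 + 1\<close>, \<open>t = q\<^sup>4 + q\<^sup>2 + 1\<close> occurring below are locale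
  parameters rather than terms, so that \<open>field_simps\<close> can clear them using \<open>s \<noteq> 0\<close> etc.;
  their definitions are unfolded only afterwards, before calling \<open>algebra\<close>.
\<close>

locale clq_params =
  fixes q cc s u t :: complex
  assumes q_nonzero [simp]: "q \<noteq> 0"
    and cc_nonzero [simp]: "cc \<noteq> 0"
    and not_root_of_unity: "\<And>n::nat. n > 0 \<Longrightarrow> q ^ n \<noteq> 1"
    and s_def: "s = q^2 + 1" and u_def: "u = q^4 + 1" and t_def: "t = q^4 + q^2 + 1"
begin

lemma divisor_of_power_minus_one_nonzero:
  assumes "p * f = q ^ n - 1" and "n > 0"
  shows "f \<noteq> 0"
  using assms not_root_of_unity[of n] by auto

lemma q_square_minus_one_nonzero [simp]: "q^2 - 1 \<noteq> 0"
  by (rule divisor_of_power_minus_one_nonzero[of 1 _ 2]) simp_all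

lemma q_square_plus_one_nonzero [simp]: "q^2 + 1 \<noteq> 0"
  by (rule divisor_of_power_minus_one_nonzero[of "q^2 - 1" _ 4]) (simp_all, algebra)

lemma s_nonzero [simp]: "s \<noteq> 0"
  by (simp add: s_def)

lemma u_nonzero [simp]: "u \<noteq> 0"
  by (rule divisor_of_power_minus_one_nonzero[of "q^4 - 1" _ 8]) (simp_all add: u_def, algebra)

lemma t_nonzero [simp]: "t \<noteq> 0"
  by (rule divisor_of_power_minus_one_nonzero[of "q^2 - 1" _ 6]) (simp_all add: t_def, algebra)

lemma q_minus_inverse_nonzero [simp]: "q - inverse q \<noteq> 0"
proof
  assume "q - inverse q = 0"
  then have "q * q - q * inverse q = 0"
    by (metis mult_zero_right right_diff_distrib)
  then have "q^2 - 1 = 0"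
    by (simp add: power2_eq_square)
  then show False
    using q_square_minus_one_nonzero by blast
qed

lemma power_int_double_inj:
  assumes "q powi (2 * k) = q powi (2 * k')"
  shows "k = k'"
proof (rule ccontr)
  assume "k \<noteq> k'"
  define a b where "a = min k k'" and "b = max k k'"
  have "a < b" and eq: "q powi (2 * a) = q powi (2 * b)"
    using \<open>k \<noteq> k'\<close> assms by (auto simp: a_def b_def min_def max_def)
  have "q powi (2 * b) = q powi (2 * a) * q powi (2 * (b - a))"
    by (simp add: power_int_add[symmetric] algebra_simps)
  then have "q powi (2 * (b - a)) = 1"
    using eq by simp
  moreover have "2 * (b - a) = int (nat (2 * (b - a)))"
    using \<open>a < b\<close> by simp
  ultimately have "q ^ nat (2 * (b - a)) = 1"
    by (metis power_int_of_nat)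
  then show False
    using \<open>a < b\<close> not_root_of_unity[of "nat (2 * (b - a))"] by simp
qed

lemma Rcoef_0 [simp]: "Rcoef q 0 = 1"
  by (simp add: Rcoef_def qfact_def)

lemma Rcoef_1 [simp]: "Rcoef q 1 = q - 1 / q" "Rcoef q (Suc 0) = q - 1 / q"
  by (simp_all add: Rcoef_def qfact_def qint_def divide_inverse)

lemma Rcoef_2 [simp]: "Rcoef q 2 = (q^2 - 1)^2 / s"
proof -
  have "{1..2::nat} = {1, 2}"
    by auto
  then have "qfact q 2 = qint q 1 * qint q 2"
    by (simp add: qfact_def)
  moreover have "q^2 - inverse q ^ 2 = (q - inverse q) * (q + inverse q)"
    by (simp add: algebra_simps power2_eq_square)
  ultimately have "Rcoef q 2 = q * (q - 1/q)^2 / (q + 1/q)"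
    by (simp add: Rcoef_def qint_def divide_inverse)
  also have "\<dots> = (q^2 - 1)^2 / s"
  proof -
    have "q * (q - 1/q)^2 * s = (q^2 - 1)^2 * (q + 1/q)"
      by (simp add: s_def field_simps) algebra
    moreover have "q + 1/q \<noteq> 0"
      using q_square_plus_one_nonzero by (simp add: field_simps power2_eq_square)
    ultimately show ?thesis
      by (simp add: frac_eq_eq)
  qed
  finally show ?thesis .
qed

end

lemmas cl_structure_defs =
  word_def wprod_def lmul_def mult_def emb_def gen_cl_def K_gen_def Kinv_gen_def one_cl_def

lemmas coords_simps =
  bv_mon_eq_mk_cl bv_gen_eq_mk_V zero_cl_eq_mk_cl zero_V_eq_mk_V linext_mk_cl linext_mk_V
  power_int_minus_divide

lemma mult_ClV_mk_ClV:
  "mult_ClV q cc (mk_ClV A B C)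
     = mult q cc A (gen_cl Vp) + mult q cc B (gen_cl Vz) + mult q cc C (gen_cl Vm)"
  unfolding mult_ClV_def linext_mk_ClV by (simp add: mult_def linext_bv)

lemma lmul_p_mon_basis [simp]:
  "lmul_p_mon (False,False,False) = mk_cl 0 0 0 0 1 0 0 0"
  "lmul_p_mon (False,False,True) = mk_cl 0 0 0 0 0 1 0 0"
  "lmul_p_mon (False,True,False) = mk_cl 0 0 0 0 0 0 1 0"
  "lmul_p_mon (False,True,True) = mk_cl 0 0 0 0 0 0 0 1"
  "lmul_p_mon (True,False,False) = mk_cl 0 0 0 0 0 0 0 0"
  "lmul_p_mon (True,False,True) = mk_cl 0 0 0 0 0 0 0 0"
  "lmul_p_mon (True,True,False) = mk_cl 0 0 0 0 0 0 0 0"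
  "lmul_p_mon (True,True,True) = mk_cl 0 0 0 0 0 0 0 0"
  by (simp_all add: lmul_p_mon_def coords_simps)

context clq_params
begin

lemma lmul_z_mon_basis [simp]:
  "lmul_z_mon q cc (False,False,False) = mk_cl 0 0 1 0 0 0 0 0"
  "lmul_z_mon q cc (False,False,True) = mk_cl 0 0 0 1 0 0 0 0"
  "lmul_z_mon q cc (False,True,False) = mk_cl ((q^2 + 1) * cc / q) 0 0 0 0 ((- (q^4) + 1) / q^3) 0 0"
  "lmul_z_mon q cc (False,True,True) = mk_cl 0 ((q^2 + 1) * cc / q) 0 0 0 0 0 0"
  "lmul_z_mon q cc (True,False,False) = mk_cl 0 0 0 0 0 0 ((- 1) / q^2) 0"
  "lmul_z_mon q cc (True,False,True) = mk_cl 0 0 0 0 0 0 0 ((- 1) / q^2)"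
  "lmul_z_mon q cc (True,True,False) = mk_cl 0 0 0 0 ((- (q^2) - 1) * cc / q^3) 0 0 0"
  "lmul_z_mon q cc (True,True,True) = mk_cl 0 0 0 0 0 ((- (q^2) - 1) * cc / q^3) 0 0"
  by (simp add: lmul_z_mon_def lmul_z_aux_def coords_simps mk_cl_eq_iff;
      (simp add: field_simps)?; (algebra)?)+

lemma lmul_m_mon_basis [simp]:
  "lmul_m_mon q cc (False,False,False) = mk_cl 0 1 0 0 0 0 0 0"
  "lmul_m_mon q cc (False,False,True) = mk_cl 0 0 0 0 0 0 0 0"
  "lmul_m_mon q cc (False,True,False) = mk_cl 0 0 0 ((- 1) / q^2) 0 0 0 0"
  "lmul_m_mon q cc (False,True,True) = mk_cl 0 0 0 0 0 0 0 0"
  "lmul_m_mon q cc (True,False,False) = mk_cl ((q^2 + 1) * cc / q^2) 0 0 0 0 (- 1) 0 0"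
  "lmul_m_mon q cc (True,False,True) = mk_cl 0 ((q^2 + 1) * cc / q^2) 0 0 0 0 0 0"
  "lmul_m_mon q cc (True,True,False) = mk_cl 0 0 ((q^2 + 1) * cc / q^2) 0 0 0 0 (1 / q^2)"
  "lmul_m_mon q cc (True,True,True) = mk_cl 0 0 0 ((q^2 + 1) * cc / q^2) 0 0 0 0"
  by (simp add: lmul_m_mon_def lmul_m_aux_def coords_simps mk_cl_eq_iff;
      (simp add: field_simps)?; (algebra)?)+

lemma actK_coords [simp]:
  "actK q cc (mk_cl a0 a1 a2 a3 a4 a5 a6 a7)
   = mk_cl a0 (a1 / q^2) a2 (a3 / q^2) (a4 * q^2) a5 (a6 * q^2) a7"
  unfolding actK_def linext_mk_cl
  by (simp add: cl_structure_defs coords_simps mk_cl_eq_iff)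

lemma actE_coords [simp]:
  "actE q cc (mk_cl a0 a1 a2 a3 a4 a5 a6 a7)
   = mk_cl (a3 * ((q^2 + 1) * cc / q)) 0 a1 0 (a2 * ((- (q^2) - 1) / q) + a7 * ((q^2 + 1) * cc / q))
       (a3 * ((- (q^2) - 1) / q)) a5 0"
  unfolding actE_def linext_mk_cl
  by (simp add: cl_structure_defs coords_simps mk_cl_eq_iff; (simp add: field_simps)?; (algebra)?)

lemma actF_coords [simp]:
  "actF q cc (mk_cl a0 a1 a2 a3 a4 a5 a6 a7)
   = mk_cl (a6 * ((- (q^2) - 1) * cc / q)) (a2 * ((q^2 + 1) / q) + a7 * ((- (q^2) - 1) * cc / q))
       (a4 * (- 1)) (a5 * (- 1)) 0 (a6 * ((q^2 + 1) / q)) 0 0"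
  unfolding actF_def linext_mk_cl
  by (simp add: cl_structure_defs coords_simps mk_cl_eq_iff; (simp add: field_simps)?; (algebra)?)

lemma EV_coords [simp]: "EV q (mk_V x0 x1 x2) = mk_V (x1 * ((- (q^2) - 1) / q)) x2 0"
  unfolding EV_def linext_mk_V by (simp add: coords_simps mk_V_eq_iff field_simps power2_eq_square)

lemma FV_coords [simp]: "FV q (mk_V x0 x1 x2) = mk_V 0 (x0 * (- 1)) (x1 * ((q^2 + 1) / q))"
  unfolding FV_def linext_mk_V by (simp add: coords_simps mk_V_eq_iff field_simps power2_eq_square)

lemma FV_cube_zero: "(FV q ^^ 3) v = 0"
  by (subst V_eta) (simp add: numeral_3_eq_3 zero_V_eq_mk_V)

lemma gamma_q_coords [simp]:
  "gamma_q q cc = mk_cl 0 0 ((- 1) / (2 * cc)) 0 0 0 0 ((- 1) / (2 * cc^2))"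
  unfolding gamma_q_def
  by (simp add: cl_structure_defs coords_simps mk_cl_eq_iff; (simp add: field_simps)?; (algebra)?)

lemma dCl_coords [simp]:
  "dCl q cc (mk_cl a0 a1 a2 a3 a4 a5 a6 a7)
   = mk_cl (a2 * ((- (q^2) - 1) / q)) 0 0 (a1 * ((- 1) / cc)) 0
       (a2 * ((q^2 + 1) / (q * cc)) + a7 * ((- (q^2) - 1) / q)) (a4 * ((- 1) / cc)) 0"
  unfolding dCl_def
  by (simp add: cl_structure_defs coords_simps even_part_mk_cl odd_part_mk_cl mk_cl_eq_iff;
      (simp add: field_simps)?; (algebra)?)

lemma Lie_coords [simp]:
  "Lie q cc (mk_V x0 x1 x2) (mk_cl a0 a1 a2 a3 a4 a5 a6 a7)
   = mk_cl
       (x0 * a3 * ((q^2 + 1) * cc / q)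
        + x1 * a5 * ((q^4 - 1) * cc / q^3)
        + x2 * a6 * ((- (q^2) - 1) * cc / q))
       (x1 * a1 * ((- (q^2) - 1) / q)
        + x2 * a2 * ((q^2 + 1) / q^3)
        + x2 * a7 * ((- (q^2) - 1) * cc / q^3))
       (x0 * a1
        + x1 * a2 * ((- (q^4) + 1) / q^3)
        + x1 * a7 * ((q^4 - 1) * cc / q^3)
        + x2 * a4 * (- 1))
       (x1 * a3 * ((- (q^2) - 1) / q) + x2 * a5 * ((- 1) / q^2))
       (x0 * a2 * ((- (q^2) - 1) / q) + x0 * a7 * ((q^2 + 1) * cc / q) + x1 * a4 * ((q^2 + 1) / q^3))
       (x0 * a3 * ((- (q^2) - 1) / q) + x1 * a5 * ((- (q^4) + 1) / q^3) + x2 * a6 * ((q^2 + 1) / q))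
       (x0 * a5 + x1 * a6 * ((q^2 + 1) / q^3)) 0"
  unfolding Lie_def
  by (simp add: mk_cl_eq_iff; (simp add: field_simps)?; (algebra)?)

lemma braid_entry_V_Cl [simp]:
  "braid_entry q wt_gen (EV q) wt_mon (actF q cc) (Vp,(False,False,False))
   = mk_ClV (mk_cl 1 0 0 0 0 0 0 0) (mk_cl 0 0 0 0 0 0 0 0) (mk_cl 0 0 0 0 0 0 0 0)"
  "braid_entry q wt_gen (EV q) wt_mon (actF q cc) (Vp,(False,False,True))
   = mk_ClV (mk_cl 0 (1 / q^2) 0 0 0 0 0 0) (mk_cl 0 0 0 0 0 0 0 0) (mk_cl 0 0 0 0 0 0 0 0)"
  "braid_entry q wt_gen (EV q) wt_mon (actF q cc) (Vp,(False,True,False))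
   = mk_ClV (mk_cl 0 0 1 0 0 0 0 0) (mk_cl 0 0 0 0 0 0 0 0) (mk_cl 0 0 0 0 0 0 0 0)"
  "braid_entry q wt_gen (EV q) wt_mon (actF q cc) (Vp,(False,True,True))
   = mk_ClV (mk_cl 0 0 0 (1 / q^2) 0 0 0 0) (mk_cl 0 0 0 0 0 0 0 0) (mk_cl 0 0 0 0 0 0 0 0)"
  "braid_entry q wt_gen (EV q) wt_mon (actF q cc) (Vp,(True,False,False))
   = mk_ClV (mk_cl 0 0 0 0 (q^2) 0 0 0) (mk_cl 0 0 0 0 0 0 0 0) (mk_cl 0 0 0 0 0 0 0 0)"
  "braid_entry q wt_gen (EV q) wt_mon (actF q cc) (Vp,(True,False,True))
   = mk_ClV (mk_cl 0 0 0 0 0 1 0 0) (mk_cl 0 0 0 0 0 0 0 0) (mk_cl 0 0 0 0 0 0 0 0)"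
  "braid_entry q wt_gen (EV q) wt_mon (actF q cc) (Vp,(True,True,False))
   = mk_ClV (mk_cl 0 0 0 0 0 0 (q^2) 0) (mk_cl 0 0 0 0 0 0 0 0) (mk_cl 0 0 0 0 0 0 0 0)"
  "braid_entry q wt_gen (EV q) wt_mon (actF q cc) (Vp,(True,True,True))
   = mk_ClV (mk_cl 0 0 0 0 0 0 0 1) (mk_cl 0 0 0 0 0 0 0 0) (mk_cl 0 0 0 0 0 0 0 0)"
  "braid_entry q wt_gen (EV q) wt_mon (actF q cc) (Vz,(False,False,False))
   = mk_ClV (mk_cl 0 0 0 0 0 0 0 0) (mk_cl 1 0 0 0 0 0 0 0) (mk_cl 0 0 0 0 0 0 0 0)"
  "braid_entry q wt_gen (EV q) wt_mon (actF q cc) (Vz,(False,False,True))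
   = mk_ClV (mk_cl 0 0 0 0 0 0 0 0) (mk_cl 0 1 0 0 0 0 0 0) (mk_cl 0 0 0 0 0 0 0 0)"
  "braid_entry q wt_gen (EV q) wt_mon (actF q cc) (Vz,(False,True,False))
   = mk_ClV (mk_cl 0 ((- (q^6) - q^4 + q^2 + 1) / q^5) 0 0 0 0 0 0) (mk_cl 0 0 1 0 0 0 0 0)
       (mk_cl 0 0 0 0 0 0 0 0)"
  "braid_entry q wt_gen (EV q) wt_mon (actF q cc) (Vz,(False,True,True))
   = mk_ClV (mk_cl 0 0 0 0 0 0 0 0) (mk_cl 0 0 0 1 0 0 0 0) (mk_cl 0 0 0 0 0 0 0 0)"
  "braid_entry q wt_gen (EV q) wt_mon (actF q cc) (Vz,(True,False,False))
   = mk_ClV (mk_cl 0 0 ((q^4 - 1) / q^2) 0 0 0 0 0) (mk_cl 0 0 0 0 1 0 0 0) (mk_cl 0 0 0 0 0 0 0 0)"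
  "braid_entry q wt_gen (EV q) wt_mon (actF q cc) (Vz,(True,False,True))
   = mk_ClV (mk_cl 0 0 0 ((q^4 - 1) / q^4) 0 0 0 0) (mk_cl 0 0 0 0 0 1 0 0) (mk_cl 0 0 0 0 0 0 0 0)"
  "braid_entry q wt_gen (EV q) wt_mon (actF q cc) (Vz,(True,True,False))
   = mk_ClV (mk_cl ((q^6 + q^4 - q^2 - 1) * cc / q^3) 0 0 0 0 ((- (q^6) - q^4 + q^2 + 1) / q^3) 0 0)
       (mk_cl 0 0 0 0 0 0 1 0) (mk_cl 0 0 0 0 0 0 0 0)"
  "braid_entry q wt_gen (EV q) wt_mon (actF q cc) (Vz,(True,True,True))
   = mk_ClV (mk_cl 0 ((q^6 + q^4 - q^2 - 1) * cc / q^5) 0 0 0 0 0 0) (mk_cl 0 0 0 0 0 0 0 1)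
       (mk_cl 0 0 0 0 0 0 0 0)"
  "braid_entry q wt_gen (EV q) wt_mon (actF q cc) (Vm,(False,False,False))
   = mk_ClV (mk_cl 0 0 0 0 0 0 0 0) (mk_cl 0 0 0 0 0 0 0 0) (mk_cl 1 0 0 0 0 0 0 0)"
  "braid_entry q wt_gen (EV q) wt_mon (actF q cc) (Vm,(False,False,True))
   = mk_ClV (mk_cl 0 0 0 0 0 0 0 0) (mk_cl 0 0 0 0 0 0 0 0) (mk_cl 0 (q^2) 0 0 0 0 0 0)"
  "braid_entry q wt_gen (EV q) wt_mon (actF q cc) (Vm,(False,True,False))
   = mk_ClV (mk_cl 0 0 0 0 0 0 0 0) (mk_cl 0 ((q^4 - 1) / q^2) 0 0 0 0 0 0) (mk_cl 0 0 1 0 0 0 0 0)"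
  "braid_entry q wt_gen (EV q) wt_mon (actF q cc) (Vm,(False,True,True))
   = mk_ClV (mk_cl 0 0 0 0 0 0 0 0) (mk_cl 0 0 0 0 0 0 0 0) (mk_cl 0 0 0 (q^2) 0 0 0 0)"
  "braid_entry q wt_gen (EV q) wt_mon (actF q cc) (Vm,(True,False,False))
   = mk_ClV (mk_cl 0 ((q^6 - q^4 - q^2 + 1) / q^4) 0 0 0 0 0 0)
       (mk_cl 0 0 ((- (q^2) + 1) / q) 0 0 0 0 0)
       (mk_cl 0 0 0 0 (1 / q^2) 0 0 0)"
  "braid_entry q wt_gen (EV q) wt_mon (actF q cc) (Vm,(True,False,True))
   = mk_ClV (mk_cl 0 0 0 0 0 0 0 0) (mk_cl 0 0 0 ((- (q^2) + 1) / q) 0 0 0 0)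
       (mk_cl 0 0 0 0 0 1 0 0)"
  "braid_entry q wt_gen (EV q) wt_mon (actF q cc) (Vm,(True,True,False))
   = mk_ClV (mk_cl 0 0 0 ((q^6 - q^4 - q^2 + 1) / q^4) 0 0 0 0)
       (mk_cl ((- (q^4) + 1) * cc / q^2) 0 0 0 0 ((q^4 - 1) / q^2) 0 0)
       (mk_cl 0 0 0 0 0 0 (1 / q^2) 0)"
  "braid_entry q wt_gen (EV q) wt_mon (actF q cc) (Vm,(True,True,True))
   = mk_ClV (mk_cl 0 0 0 0 0 0 0 0) (mk_cl 0 ((- (q^4) + 1) * cc / q^2) 0 0 0 0 0 0)
       (mk_cl 0 0 0 0 0 0 0 1)"
  by (rule trans[OF ClV_eta],
      (simp add: braid_entry_def card_UNIV_gen sum_lessThan_3 funpow_0_1_2 coords_simps wt_mon_def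
        mk_ClV_eq_iff mk_cl_eq_iff; ((simp add: field_simps)?; ((simp only: s_def)?; (algebra)?))))+

lemma braid_entry_Cl_V [simp]:
  "braid_entry q wt_mon (actE q cc) wt_gen (FV q) ((False,False,False),Vp)
   = mk_VCl (mk_cl 1 0 0 0 0 0 0 0) (mk_cl 0 0 0 0 0 0 0 0) (mk_cl 0 0 0 0 0 0 0 0)"
  "braid_entry q wt_mon (actE q cc) wt_gen (FV q) ((False,False,True),Vp)
   = mk_VCl (mk_cl 0 (1 / q^2) 0 0 0 0 0 0) (mk_cl 0 0 ((- (q^2) + 1) / q) 0 0 0 0 0)
       (mk_cl 0 0 0 0 ((q^6 - q^4 - q^2 + 1) / q^4) 0 0 0)"
  "braid_entry q wt_mon (actE q cc) wt_gen (FV q) ((False,True,False),Vp)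
   = mk_VCl (mk_cl 0 0 1 0 0 0 0 0) (mk_cl 0 0 0 0 ((q^4 - 1) / q^2) 0 0 0) (mk_cl 0 0 0 0 0 0 0 0)"
  "braid_entry q wt_mon (actE q cc) wt_gen (FV q) ((False,True,True),Vp)
   = mk_VCl (mk_cl 0 0 0 (1 / q^2) 0 0 0 0)
       (mk_cl ((- (q^4) + 1) * cc / q^2) 0 0 0 0 ((q^4 - 1) / q^2) 0 0)
       (mk_cl 0 0 0 0 0 0 ((q^6 - q^4 - q^2 + 1) / q^4) 0)"
  "braid_entry q wt_mon (actE q cc) wt_gen (FV q) ((True,False,False),Vp)
   = mk_VCl (mk_cl 0 0 0 0 (q^2) 0 0 0) (mk_cl 0 0 0 0 0 0 0 0) (mk_cl 0 0 0 0 0 0 0 0)"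
  "braid_entry q wt_mon (actE q cc) wt_gen (FV q) ((True,False,True),Vp)
   = mk_VCl (mk_cl 0 0 0 0 0 1 0 0) (mk_cl 0 0 0 0 0 0 ((- (q^2) + 1) / q) 0)
       (mk_cl 0 0 0 0 0 0 0 0)"
  "braid_entry q wt_mon (actE q cc) wt_gen (FV q) ((True,True,False),Vp)
   = mk_VCl (mk_cl 0 0 0 0 0 0 (q^2) 0) (mk_cl 0 0 0 0 0 0 0 0) (mk_cl 0 0 0 0 0 0 0 0)"
  "braid_entry q wt_mon (actE q cc) wt_gen (FV q) ((True,True,True),Vp)
   = mk_VCl (mk_cl 0 0 0 0 0 0 0 1) (mk_cl 0 0 0 0 ((- (q^4) + 1) * cc / q^2) 0 0 0)
       (mk_cl 0 0 0 0 0 0 0 0)"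
  "braid_entry q wt_mon (actE q cc) wt_gen (FV q) ((False,False,False),Vz)
   = mk_VCl (mk_cl 0 0 0 0 0 0 0 0) (mk_cl 1 0 0 0 0 0 0 0) (mk_cl 0 0 0 0 0 0 0 0)"
  "braid_entry q wt_mon (actE q cc) wt_gen (FV q) ((False,False,True),Vz)
   = mk_VCl (mk_cl 0 0 0 0 0 0 0 0) (mk_cl 0 1 0 0 0 0 0 0) (mk_cl 0 0 ((q^4 - 1) / q^2) 0 0 0 0 0)"
  "braid_entry q wt_mon (actE q cc) wt_gen (FV q) ((False,True,False),Vz)
   = mk_VCl (mk_cl 0 0 0 0 0 0 0 0) (mk_cl 0 0 1 0 0 0 0 0)
       (mk_cl 0 0 0 0 ((- (q^6) - q^4 + q^2 + 1) / q^5) 0 0 0)"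
  "braid_entry q wt_mon (actE q cc) wt_gen (FV q) ((False,True,True),Vz)
   = mk_VCl (mk_cl 0 0 0 0 0 0 0 0) (mk_cl 0 0 0 1 0 0 0 0)
       (mk_cl ((q^6 + q^4 - q^2 - 1) * cc / q^3) 0 0 0 0 ((- (q^6) - q^4 + q^2 + 1) / q^3) 0 0)"
  "braid_entry q wt_mon (actE q cc) wt_gen (FV q) ((True,False,False),Vz)
   = mk_VCl (mk_cl 0 0 0 0 0 0 0 0) (mk_cl 0 0 0 0 1 0 0 0) (mk_cl 0 0 0 0 0 0 0 0)"
  "braid_entry q wt_mon (actE q cc) wt_gen (FV q) ((True,False,True),Vz)
   = mk_VCl (mk_cl 0 0 0 0 0 0 0 0) (mk_cl 0 0 0 0 0 1 0 0) (mk_cl 0 0 0 0 0 0 ((q^4 - 1) / q^4) 0)"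
  "braid_entry q wt_mon (actE q cc) wt_gen (FV q) ((True,True,False),Vz)
   = mk_VCl (mk_cl 0 0 0 0 0 0 0 0) (mk_cl 0 0 0 0 0 0 1 0) (mk_cl 0 0 0 0 0 0 0 0)"
  "braid_entry q wt_mon (actE q cc) wt_gen (FV q) ((True,True,True),Vz)
   = mk_VCl (mk_cl 0 0 0 0 0 0 0 0) (mk_cl 0 0 0 0 0 0 0 1)
       (mk_cl 0 0 0 0 ((q^6 + q^4 - q^2 - 1) * cc / q^5) 0 0 0)"
  "braid_entry q wt_mon (actE q cc) wt_gen (FV q) ((False,False,False),Vm)
   = mk_VCl (mk_cl 0 0 0 0 0 0 0 0) (mk_cl 0 0 0 0 0 0 0 0) (mk_cl 1 0 0 0 0 0 0 0)"
  "braid_entry q wt_mon (actE q cc) wt_gen (FV q) ((False,False,True),Vm)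
   = mk_VCl (mk_cl 0 0 0 0 0 0 0 0) (mk_cl 0 0 0 0 0 0 0 0) (mk_cl 0 (q^2) 0 0 0 0 0 0)"
  "braid_entry q wt_mon (actE q cc) wt_gen (FV q) ((False,True,False),Vm)
   = mk_VCl (mk_cl 0 0 0 0 0 0 0 0) (mk_cl 0 0 0 0 0 0 0 0) (mk_cl 0 0 1 0 0 0 0 0)"
  "braid_entry q wt_mon (actE q cc) wt_gen (FV q) ((False,True,True),Vm)
   = mk_VCl (mk_cl 0 0 0 0 0 0 0 0) (mk_cl 0 0 0 0 0 0 0 0) (mk_cl 0 0 0 (q^2) 0 0 0 0)"
  "braid_entry q wt_mon (actE q cc) wt_gen (FV q) ((True,False,False),Vm)
   = mk_VCl (mk_cl 0 0 0 0 0 0 0 0) (mk_cl 0 0 0 0 0 0 0 0) (mk_cl 0 0 0 0 (1 / q^2) 0 0 0)"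
  "braid_entry q wt_mon (actE q cc) wt_gen (FV q) ((True,False,True),Vm)
   = mk_VCl (mk_cl 0 0 0 0 0 0 0 0) (mk_cl 0 0 0 0 0 0 0 0) (mk_cl 0 0 0 0 0 1 0 0)"
  "braid_entry q wt_mon (actE q cc) wt_gen (FV q) ((True,True,False),Vm)
   = mk_VCl (mk_cl 0 0 0 0 0 0 0 0) (mk_cl 0 0 0 0 0 0 0 0) (mk_cl 0 0 0 0 0 0 (1 / q^2) 0)"
  "braid_entry q wt_mon (actE q cc) wt_gen (FV q) ((True,True,True),Vm)
   = mk_VCl (mk_cl 0 0 0 0 0 0 0 0) (mk_cl 0 0 0 0 0 0 0 0) (mk_cl 0 0 0 0 0 0 0 1)"
  by (rule trans[OF VCl_eta],
      (simp add: braid_entry_truncate[OF FV_cube_zero] card_UNIV_mon sum_lessThan_3 funpow_0_1_2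
        coords_simps wt_mon_def mk_VCl_eq_iff mk_cl_eq_iff;
        ((simp add: field_simps)?; ((simp only: s_def)?; (algebra)?))))+

lemma sigma_VCl_coords [simp]:
  "sigma_VCl q cc
     (mk_VCl (mk_cl a0 a1 a2 a3 a4 a5 a6 a7) (mk_cl b0 b1 b2 b3 b4 b5 b6 b7)
        (mk_cl c0 c1 c2 c3 c4 c5 c6 c7))
   = mk_ClV
       (mk_cl (a0 + b6 * ((q^6 + q^4 - q^2 - 1) * cc / q^3))
          (a1 / q^2
           + b2 * ((- (q^6) - q^4 + q^2 + 1) / q^5)
           + b7 * ((q^6 + q^4 - q^2 - 1) * cc / q^5)
           + c4 * ((q^6 - q^4 - q^2 + 1) / q^4))
          (a2 + b4 * ((q^4 - 1) / q^2))
          (a3 / q^2 + b5 * ((q^4 - 1) / q^4) + c6 * ((q^6 - q^4 - q^2 + 1) / q^4)) (a4 * q^2)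
          (a5 + b6 * ((- (q^6) - q^4 + q^2 + 1) / q^3)) (a6 * q^2) a7)
       (mk_cl (b0 + c6 * ((- (q^4) + 1) * cc / q^2))
          (b1 + c2 * ((q^4 - 1) / q^2) + c7 * ((- (q^4) + 1) * cc / q^2))
          (b2 + c4 * ((- (q^2) + 1) / q)) (b3 + c5 * ((- (q^2) + 1) / q)) b4
          (b5 + c6 * ((q^4 - 1) / q^2)) b6 b7)
       (mk_cl c0 (c1 * q^2) c2 (c3 * q^2) (c4 / q^2) c5 (c6 / q^2) c7)"
  unfolding sigma_VCl_def braid_eq_linext_entry linext_mk_VCl linext_mk_cl
  by (simp add: mk_ClV_eq_iff mk_cl_eq_iff;
      (simp add: field_simps)?; (simp only: s_def)?; (algebra)?)

lemma sigma_ClV_coords [simp]: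
  "sigma_ClV q cc
     (mk_ClV (mk_cl a0 a1 a2 a3 a4 a5 a6 a7) (mk_cl b0 b1 b2 b3 b4 b5 b6 b7)
        (mk_cl c0 c1 c2 c3 c4 c5 c6 c7))
   = mk_VCl (mk_cl a0 (a1 / q^2) a2 (a3 / q^2) (a4 * q^2) a5 (a6 * q^2) a7)
       (mk_cl (a3 * ((- (q^4) + 1) * cc / q^2) + b0) b1
          (a1 * ((- (q^2) + 1) / q) + b2) b3
          (a2 * ((q^4 - 1) / q^2) + a7 * ((- (q^4) + 1) * cc / q^2) + b4)
          (a3 * ((q^4 - 1) / q^2) + b5) (a5 * ((- (q^2) + 1) / q) + b6) b7)
       (mk_cl (b3 * ((q^6 + q^4 - q^2 - 1) * cc / q^3) + c0) (c1 * q^2)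
          (b1 * ((q^4 - 1) / q^2) + c2) (c3 * q^2)
          (a1 * ((q^6 - q^4 - q^2 + 1) / q^4)
           + b2 * ((- (q^6) - q^4 + q^2 + 1) / q^5)
           + b7 * ((q^6 + q^4 - q^2 - 1) * cc / q^5)
           + c4 / q^2)
          (b3 * ((- (q^6) - q^4 + q^2 + 1) / q^3) + c5)
          (a3 * ((q^6 - q^4 - q^2 + 1) / q^4) + b5 * ((q^4 - 1) / q^4) + c6 / q^2) c7)"
  unfolding sigma_ClV_def braid_eq_linext_entry linext_mk_ClV linext_mk_cl
  by (simp add: mk_VCl_eq_iff mk_cl_eq_iff;
      (simp add: field_simps)?; (simp only: s_def)?; (algebra)?)

end

lemma pairing_mk_VCl:
  "pairing
     (mk_VCl (mk_cl a0 a1 a2 a3 a4 a5 a6 a7) (mk_cl b0 b1 b2 b3 b4 b5 b6 b7)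
        (mk_cl c0 c1 c2 c3 c4 c5 c6 c7))
     (mk_VCl (mk_cl x0 x1 x2 x3 x4 x5 x6 x7) (mk_cl y0 y1 y2 y3 y4 y5 y6 y7)
        (mk_cl z0 z1 z2 z3 z4 z5 z6 z7)) =
   a0*x0 + a1*x1 + a2*x2 + a3*x3 + a4*x4 + a5*x5 + a6*x6 + a7*x7
   + (b0*y0 + b1*y1 + b2*y2 + b3*y3 + b4*y4 + b5*y5 + b6*y6 + b7*y7)
   + (c0*z0 + c1*z1 + c2*z2 + c3*z3 + c4*z4 + c5*z5 + c6*z6 + c7*z7)"
  by (simp add: pairing_def sum_UNIV_gen_mon sum_UNIV_mon add.assoc)

context clq_params
begin

section \<open>Diagonalising the double braiding\<close>

text \<open>
  With \<open>V\<^sub>n\<close> the simple module of highest weight \<open>n\<close>, \<open>V \<otimes> Cl \<cong> 2V\<^sub>0 \<oplus> 4V\<^sub>2 \<oplus> 2V\<^sub>4\<close>, and the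
  double braiding acts on a summand \<open>V\<^sub>\<nu> \<subseteq> V\<^sub>2 \<otimes> V\<^sub>\<mu>\<close> by \<open>q\<^bsup>c(\<nu>) - c(2) - c(\<mu>)\<^esup>\<close>, where
  \<open>c(n) = n(n+2)/2\<close>.  These are the eigenvalues \<open>q\<^bsup>2\<kappa>\<^esup>\<close> below.
\<close>

fun eig_exp :: "gen \<times> mon \<Rightarrow> int" where
  "eig_exp (Vp, False, False, _) = -4"
| "eig_exp (Vp, _) = -2"
| "eig_exp (Vz, True, True, _) = 2"
| "eig_exp (Vz, _) = 0"
| "eig_exp (Vm, _) = 2"

fun eigvec :: "gen \<times> mon \<Rightarrow> (gen \<times> mon) vec" where
  "eigvec (Vp,False,False,False)
   = mk_VCl (mk_cl 0 (q^2) 0 0 0 0 0 0) (mk_cl 0 0 ((q^3) / s) 0 0 0 0 0) (mk_cl 0 0 0 0 1 0 0 0)"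
| "eigvec (Vp,False,False,True)
   = mk_VCl (mk_cl 0 0 0 (q^2) 0 0 0 0) (mk_cl ((q^2) * cc) 0 0 0 0 (- (q^2)) 0 0)
       (mk_cl 0 0 0 0 0 0 1 0)"
| "eigvec (Vp,False,True,False)
   = mk_VCl (mk_cl 0 0 (- (q^2)) 0 0 0 0 0) (mk_cl 0 0 0 0 1 0 0 0) (mk_cl 0 0 0 0 0 0 0 0)"
| "eigvec (Vp,False,True,True)
   = mk_VCl (mk_cl ((- (q^3) - q) * cc) 0 0 0 0 (q^3 + q) 0 0) (mk_cl 0 0 0 0 0 0 1 0)
       (mk_cl 0 0 0 0 0 0 0 0)"
| "eigvec (Vp,True,False,False)
   = mk_VCl (mk_cl 0 0 0 0 0 0 0 0) (mk_cl 0 (- (q^2)) 0 0 0 0 0 0) (mk_cl 0 0 1 0 0 0 0 0)"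
| "eigvec (Vp,True,False,True)
   = mk_VCl (mk_cl 0 (- 1) 0 0 0 0 0 0) (mk_cl 0 0 ((q^3 - q) / s) 0 0 0 0 0)
       (mk_cl 0 0 0 0 1 0 0 0)"
| "eigvec (Vp,True,True,False)
   = mk_VCl (mk_cl 0 0 0 0 0 0 0 0) (mk_cl 0 0 0 ((q^3) / s) 0 0 0 0) (mk_cl (- cc) 0 0 0 0 1 0 0)"
| "eigvec (Vp,True,True,True)
   = mk_VCl (mk_cl 0 0 0 (- 1) 0 0 0 0) (mk_cl ((q^2 - 1) * cc) 0 0 0 0 (- (q^2) + 1) 0 0)
       (mk_cl 0 0 0 0 0 0 1 0)"
| "eigvec (Vz,False,False,False)
   = mk_VCl (mk_cl 1 0 0 0 0 0 0 0) (mk_cl 0 0 0 0 0 0 0 0) (mk_cl 0 0 0 0 0 0 0 0)"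
| "eigvec (Vz,False,False,True)
   = mk_VCl (mk_cl 0 0 cc 0 0 0 0 1) (mk_cl 0 0 0 0 0 0 0 0) (mk_cl 0 0 0 0 0 0 0 0)"
| "eigvec (Vz,False,True,False)
   = mk_VCl (mk_cl 0 0 0 0 0 0 0 0) (mk_cl 1 0 0 0 0 0 0 0) (mk_cl 0 0 0 0 0 0 0 0)"
| "eigvec (Vz,False,True,True)
   = mk_VCl (mk_cl 0 0 0 0 0 0 0 0) (mk_cl 0 0 cc 0 0 0 0 1) (mk_cl 0 0 0 0 0 0 0 0)"
| "eigvec (Vz,True,False,False)
   = mk_VCl (mk_cl 0 0 0 0 0 0 0 0) (mk_cl 0 0 0 0 0 0 0 0) (mk_cl 1 0 0 0 0 0 0 0)"
| "eigvec (Vz,True,False,True)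
   = mk_VCl (mk_cl 0 0 0 0 0 0 0 0) (mk_cl 0 0 0 0 0 0 0 0) (mk_cl 0 0 cc 0 0 0 0 1)"
| "eigvec (Vz,True,True,False)
   = mk_VCl (mk_cl 0 0 0 0 1 0 0 0) (mk_cl 0 0 0 0 0 0 0 0) (mk_cl 0 0 0 0 0 0 0 0)"
| "eigvec (Vz,True,True,True)
   = mk_VCl (mk_cl 0 0 0 0 0 0 1 0) (mk_cl 0 0 0 0 0 0 0 0) (mk_cl 0 0 0 0 0 0 0 0)"
| "eigvec (Vm,False,False,False)
   = mk_VCl (mk_cl 0 0 (1 / q^2) 0 0 0 0 0) (mk_cl 0 0 0 0 1 0 0 0) (mk_cl 0 0 0 0 0 0 0 0)"
| "eigvec (Vm,False,False,True)
   = mk_VCl (mk_cl ((q^2 + 1) * cc / q^3) 0 0 0 0 ((- (q^2) - 1) / q^3) 0 0) (mk_cl 0 0 0 0 0 0 1 0)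
       (mk_cl 0 0 0 0 0 0 0 0)"
| "eigvec (Vm,False,True,False)
   = mk_VCl (mk_cl 0 0 0 0 0 0 0 0) (mk_cl 0 0 0 0 0 0 0 0) (mk_cl 0 1 0 0 0 0 0 0)"
| "eigvec (Vm,False,True,True)
   = mk_VCl (mk_cl 0 0 0 0 0 0 0 0) (mk_cl 0 (1 / q^2) 0 0 0 0 0 0) (mk_cl 0 0 1 0 0 0 0 0)"
| "eigvec (Vm,True,False,False)
   = mk_VCl (mk_cl 0 0 0 0 0 0 0 0) (mk_cl 0 0 0 0 0 0 0 0) (mk_cl 0 0 0 1 0 0 0 0)"
| "eigvec (Vm,True,False,True)
   = mk_VCl (mk_cl 0 (1 / q^4) 0 0 0 0 0 0) (mk_cl 0 0 ((- 1) / q) 0 0 0 0 0)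
       (mk_cl 0 0 0 0 1 0 0 0)"
| "eigvec (Vm,True,True,False)
   = mk_VCl (mk_cl 0 0 0 0 0 0 0 0) (mk_cl 0 0 0 ((- 1) / (q * s)) 0 0 0 0)
       (mk_cl (- cc) 0 0 0 0 1 0 0)"
| "eigvec (Vm,True,True,True)
   = mk_VCl (mk_cl 0 0 0 (1 / q^4) 0 0 0 0)
       (mk_cl ((- (q^2) - 1) * cc / q^2) 0 0 0 0 ((q^2 + 1) / q^2) 0 0) (mk_cl 0 0 0 0 0 0 1 0)"

fun dual_eigvec :: "gen \<times> mon \<Rightarrow> (gen \<times> mon) vec" where
  "dual_eigvec (Vp,False,False,False)
   = mk_VCl (mk_cl 0 ((q^2) / t) 0 0 0 0 0 0)
       (mk_cl 0 0 ((q^2 + 1) / (q * t)) 0 0 0 0 ((- (q^2) - 1) * cc / (q * t)))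
       (mk_cl 0 0 0 0 (1 / t) 0 0 0)"
| "dual_eigvec (Vp,False,False,True)
   = mk_VCl (mk_cl 0 0 0 ((q^2) / t) 0 0 0 0) (mk_cl 0 0 0 0 0 ((- 1) / t) 0 0)
       (mk_cl 0 0 0 0 0 0 (1 / t) 0)"
| "dual_eigvec (Vp,False,True,False)
   = mk_VCl (mk_cl 0 0 ((- (q^2)) / u) 0 0 0 0 ((q^2) * cc / u)) (mk_cl 0 0 0 0 (1 / u) 0 0 0)
       (mk_cl 0 0 0 0 0 0 0 0)"
| "dual_eigvec (Vp,False,True,True)
   = mk_VCl (mk_cl 0 0 0 0 0 ((q^3) / (u * s)) 0 0) (mk_cl 0 0 0 0 0 0 (1 / u) 0)
       (mk_cl 0 0 0 0 0 0 0 0)"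
| "dual_eigvec (Vp,True,False,False)
   = mk_VCl (mk_cl 0 0 0 0 0 0 0 0) (mk_cl 0 ((- (q^2)) / u) 0 0 0 0 0 0)
       (mk_cl 0 0 (1 / u) 0 0 0 0 (- cc / u))"
| "dual_eigvec (Vp,True,False,True)
   = mk_VCl (mk_cl 0 ((- (q^2)) / u) 0 0 0 0 0 0)
       (mk_cl 0 0 ((q^4 - 1) / (q * u)) 0 0 0 0 ((- (q^4) + 1) * cc / (q * u)))
       (mk_cl 0 0 0 0 ((q^2) / u) 0 0 0)"
| "dual_eigvec (Vp,True,True,False)
   = mk_VCl (mk_cl 0 0 0 0 0 0 0 0) (mk_cl 0 0 0 ((q^3 + q) / u) 0 0 0 0)
       (mk_cl 0 0 0 0 0 (1 / u) 0 0)"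
| "dual_eigvec (Vp,True,True,True)
   = mk_VCl (mk_cl 0 0 0 ((- (q^2)) / u) 0 0 0 0)
       (mk_cl 0 0 0 0 0 ((- (q^2) + 1) / u) 0 0)
       (mk_cl 0 0 0 0 0 0 ((q^2) / u) 0)"
| "dual_eigvec (Vz,False,False,False)
   = mk_VCl (mk_cl 1 0 0 0 0 cc 0 0) (mk_cl 0 0 0 0 0 0 0 0) (mk_cl 0 0 0 0 0 0 0 0)"
| "dual_eigvec (Vz,False,False,True)
   = mk_VCl (mk_cl 0 0 0 0 0 0 0 1) (mk_cl 0 0 0 0 0 0 0 0) (mk_cl 0 0 0 0 0 0 0 0)"
| "dual_eigvec (Vz,False,True,False)
   = mk_VCl (mk_cl 0 0 0 0 0 0 0 0) (mk_cl 1 0 0 0 0 cc 0 0) (mk_cl 0 0 0 0 0 0 0 0)"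
| "dual_eigvec (Vz,False,True,True)
   = mk_VCl (mk_cl 0 0 0 0 0 0 0 0) (mk_cl 0 0 0 0 0 0 0 1) (mk_cl 0 0 0 0 0 0 0 0)"
| "dual_eigvec (Vz,True,False,False)
   = mk_VCl (mk_cl 0 0 0 0 0 0 0 0) (mk_cl 0 0 0 0 0 0 0 0) (mk_cl 1 0 0 0 0 cc 0 0)"
| "dual_eigvec (Vz,True,False,True)
   = mk_VCl (mk_cl 0 0 0 0 0 0 0 0) (mk_cl 0 0 0 0 0 0 0 0) (mk_cl 0 0 0 0 0 0 0 1)"
| "dual_eigvec (Vz,True,True,False)
   = mk_VCl (mk_cl 0 0 0 0 1 0 0 0) (mk_cl 0 0 0 0 0 0 0 0) (mk_cl 0 0 0 0 0 0 0 0)"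
| "dual_eigvec (Vz,True,True,True)
   = mk_VCl (mk_cl 0 0 0 0 0 0 1 0) (mk_cl 0 0 0 0 0 0 0 0) (mk_cl 0 0 0 0 0 0 0 0)"
| "dual_eigvec (Vm,False,False,False)
   = mk_VCl (mk_cl 0 0 ((q^2) / u) 0 0 0 0 ((- (q^2)) * cc / u))
       (mk_cl 0 0 0 0 ((q^4) / u) 0 0 0) (mk_cl 0 0 0 0 0 0 0 0)"
| "dual_eigvec (Vm,False,False,True)
   = mk_VCl (mk_cl 0 0 0 0 0 ((- (q^3)) / (u * s)) 0 0)
       (mk_cl 0 0 0 0 0 0 ((q^4) / u) 0) (mk_cl 0 0 0 0 0 0 0 0)"
| "dual_eigvec (Vm,False,True,False)
   = mk_VCl (mk_cl 0 0 0 0 0 0 0 0) (mk_cl 0 0 0 0 0 0 0 0) (mk_cl 0 1 0 0 0 0 0 0)"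
| "dual_eigvec (Vm,False,True,True)
   = mk_VCl (mk_cl 0 0 0 0 0 0 0 0) (mk_cl 0 ((q^2) / u) 0 0 0 0 0 0)
       (mk_cl 0 0 ((q^4) / u) 0 0 0 0 ((- (q^4)) * cc / u))"
| "dual_eigvec (Vm,True,False,False)
   = mk_VCl (mk_cl 0 0 0 0 0 0 0 0) (mk_cl 0 0 0 0 0 0 0 0) (mk_cl 0 0 0 1 0 0 0 0)"
| "dual_eigvec (Vm,True,False,True)
   = mk_VCl (mk_cl 0 ((q^4) / (u * t)) 0 0 0 0 0 0)
       (mk_cl 0 0 ((- (q^7) - 2*q^5 - q^3) / (u * t)) 0 0 0 0 ((q^7 + 2*q^5 + q^3) * cc / (u * t)))
       (mk_cl 0 0 0 0 ((q^8) / (u * t)) 0 0 0)"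
| "dual_eigvec (Vm,True,True,False)
   = mk_VCl (mk_cl 0 0 0 0 0 0 0 0) (mk_cl 0 0 0 ((- (q^3) - q) / u) 0 0 0 0)
       (mk_cl 0 0 0 0 0 ((q^4) / u) 0 0)"
| "dual_eigvec (Vm,True,True,True)
   = mk_VCl (mk_cl 0 0 0 ((q^4) / (u * t)) 0 0 0 0)
       (mk_cl 0 0 0 0 0 ((q^6 + q^4) / (u * t)) 0 0)
       (mk_cl 0 0 0 0 0 0 ((q^8) / (u * t)) 0)"

lemma double_braiding_eigvec:
  "(sigma_ClV q cc \<circ> sigma_VCl q cc) (eigvec b) = sc (q powi (2 * eig_exp b)) (eigvec b)"
proof -
  obtain g x y z where b: "b = (g, x, y, z)"
    by (cases b) auto
  show ?thesis
    unfolding b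
    by (induct g; induct x; induct y; induct z;
        simp add: power_int_minus_divide mk_VCl_eq_iff mk_cl_eq_iff;
        (simp add: field_simps)?; (simp only: s_def u_def t_def)?; (algebra)?)
qed

lemma dual_eigvec_left_eigen:
  "pairing (dual_eigvec b) ((sigma_ClV q cc \<circ> sigma_VCl q cc) v)
     = q powi (2 * eig_exp b) * pairing (dual_eigvec b) v"
proof -
  obtain g x y z where b: "b = (g, x, y, z)"
    by (cases b) auto
  show ?thesis
    unfolding b
    by (induct v rule: VCl_cases)
      (induct g; induct x; induct y; induct z;
        simp add: power_int_minus_divide pairing_mk_VCl;
        (simp add: field_simps)?; (simp only: s_def u_def t_def)?; (algebra)?)
qed

lemma dual_eigvec_complete: "(\<Sum>b\<in>UNIV. sc (dual_eigvec b i) (eigvec b)) = bv i"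
proof -
  obtain g x y z where i: "i = (g, x, y, z)"
    by (cases i) auto
  show ?thesis
    unfolding i
    by (induct g; induct x; induct y; induct z;
        simp add: sum_UNIV_gen_mon sum_UNIV_mon bv_gen_mon_eq_mk_VCl bv_mon_eq_mk_cl
          zero_cl_eq_mk_cl mk_VCl_eq_iff mk_cl_eq_iff;
        (simp add: field_simps)?; (simp only: s_def u_def t_def)?; (algebra)?)
qed

definition double_braiding_inv_sqrt :: "(gen \<times> mon) vec \<Rightarrow> (gen \<times> mon) vec" where
  "double_braiding_inv_sqrt = spectral_op eigvec dual_eigvec (\<lambda>b. q powi (- eig_exp b))"

lemma inv_sqrt_double_braiding:
  "inv_sqrt q (sigma_ClV q cc \<circ> sigma_VCl q cc) = double_braiding_inv_sqrt"
  unfolding double_braiding_inv_sqrt_def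
  by (rule inv_sqrt_eq_spectral_op[OF power_int_double_inj double_braiding_eigvec
        dual_eigvec_left_eigen dual_eigvec_complete])

lemma double_braiding_inv_sqrt_columns [simp]:
  "(\<Sum>b\<in>UNIV. sc (dual_eigvec b (Vp,False,False,False) * q powi (- eig_exp b)) (eigvec b))
   = mk_VCl (mk_cl 1 0 0 0 0 0 0 0) (mk_cl 0 0 0 0 0 0 0 0) (mk_cl 0 0 0 0 0 0 0 0)"
  "(\<Sum>b\<in>UNIV. sc (dual_eigvec b (Vp,False,False,True) * q powi (- eig_exp b)) (eigvec b))
   = mk_VCl (mk_cl 0 ((q^10 - q^8 + 2*q^6 - q^2 + 1) / (q^2 * u)) 0 0 0 0 0 0)
       (mk_cl 0 0 ((q^9 - 2*q^7 + 2*q^5 - q) / (u * s)) 0 0 0 0 0)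
       (mk_cl 0 0 0 0 ((q^6 - 2*q^4 + q^2) / u) 0 0 0)"
  "(\<Sum>b\<in>UNIV. sc (dual_eigvec b (Vp,False,True,False) * q powi (- eig_exp b)) (eigvec b))
   = mk_VCl (mk_cl 0 0 ((q^8 + 1) / (q^2 * u)) 0 0 0 0 0)
       (mk_cl 0 0 0 0 ((- (q^4) + 1) / u) 0 0 0) (mk_cl 0 0 0 0 0 0 0 0)"
  "(\<Sum>b\<in>UNIV. sc (dual_eigvec b (Vp,False,True,True) * q powi (- eig_exp b)) (eigvec b))
   = mk_VCl (mk_cl 0 0 0 ((q^10 - q^8 + 2*q^6 - q^2 + 1) / (q^2 * u)) 0 0 0 0)
       (mk_cl ((q^8 - 2*q^6 + 2*q^4 - 1) * cc / u) 0 0 0 0 ((- (q^8) + 2*q^6 - 2*q^4 + 1) / u) 0 0)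
       (mk_cl 0 0 0 0 0 0 ((q^6 - 2*q^4 + q^2) / u) 0)"
  "(\<Sum>b\<in>UNIV. sc (dual_eigvec b (Vp,True,False,False) * q powi (- eig_exp b)) (eigvec b))
   = mk_VCl (mk_cl 0 0 0 0 (1 / q^2) 0 0 0) (mk_cl 0 0 0 0 0 0 0 0) (mk_cl 0 0 0 0 0 0 0 0)"
  "(\<Sum>b\<in>UNIV. sc (dual_eigvec b (Vp,True,False,True) * q powi (- eig_exp b)) (eigvec b))
   = mk_VCl (mk_cl ((- (q^8) + q^6 + q^2 - 1) * cc / (q^2 * u)) 0 0 0 0 ((q^8 + 1) / (q^2 * u)) 0 0)
       (mk_cl 0 0 0 0 0 0 ((q^3 - q) / u) 0) (mk_cl 0 0 0 0 0 0 0 0)"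
  "(\<Sum>b\<in>UNIV. sc (dual_eigvec b (Vp,True,True,False) * q powi (- eig_exp b)) (eigvec b))
   = mk_VCl (mk_cl 0 0 0 0 0 0 (1 / q^2) 0) (mk_cl 0 0 0 0 0 0 0 0) (mk_cl 0 0 0 0 0 0 0 0)"
  "(\<Sum>b\<in>UNIV. sc (dual_eigvec b (Vp,True,True,True) * q powi (- eig_exp b)) (eigvec b))
   = mk_VCl (mk_cl 0 0 ((- (q^8) + q^6 + q^2 - 1) * cc / (q^2 * u)) 0 0 0 0 1)
       (mk_cl 0 0 0 0 ((q^4 - 1) * cc / u) 0 0 0) (mk_cl 0 0 0 0 0 0 0 0)"
  "(\<Sum>b\<in>UNIV. sc (dual_eigvec b (Vz,False,False,False) * q powi (- eig_exp b)) (eigvec b))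
   = mk_VCl (mk_cl 0 0 0 0 0 0 0 0) (mk_cl 1 0 0 0 0 0 0 0) (mk_cl 0 0 0 0 0 0 0 0)"
  "(\<Sum>b\<in>UNIV. sc (dual_eigvec b (Vz,False,False,True) * q powi (- eig_exp b)) (eigvec b))
   = mk_VCl (mk_cl 0 0 0 0 0 0 0 0) (mk_cl 0 ((q^8 + 1) / (q^2 * u)) 0 0 0 0 0 0)
       (mk_cl 0 0 ((- (q^4) + 1) / u) 0 0 0 0 0)"
  "(\<Sum>b\<in>UNIV. sc (dual_eigvec b (Vz,False,True,False) * q powi (- eig_exp b)) (eigvec b))
   = mk_VCl (mk_cl 0 ((q^10 - q^8 + 2*q^4 - q^2 - 1) / (q^3 * u)) 0 0 0 0 0 0)
       (mk_cl 0 0 ((2*q^6 - 3*q^4 + 2*q^2 + 1) / u) 0 0 0 0 0)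
       (mk_cl 0 0 0 0 ((2*q^5 - 2*q) / u) 0 0 0)"
  "(\<Sum>b\<in>UNIV. sc (dual_eigvec b (Vz,False,True,True) * q powi (- eig_exp b)) (eigvec b))
   = mk_VCl (mk_cl 0 0 0 0 0 0 0 0) (mk_cl 0 0 0 ((q^8 + 1) / (q^2 * u)) 0 0 0 0)
       (mk_cl ((- (q^6) - q^4 + q^2 + 1) * cc / (q * u)) 0 0 0 0
          ((q^6 + q^4 - q^2 - 1) / (q * u)) 0 0)"
  "(\<Sum>b\<in>UNIV. sc (dual_eigvec b (Vz,True,False,False) * q powi (- eig_exp b)) (eigvec b))
   = mk_VCl (mk_cl 0 0 ((- (q^4) + 1) / u) 0 0 0 0 0)
       (mk_cl 0 0 0 0 ((2*q^2) / u) 0 0 0) (mk_cl 0 0 0 0 0 0 0 0)"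
  "(\<Sum>b\<in>UNIV. sc (dual_eigvec b (Vz,True,False,True) * q powi (- eig_exp b)) (eigvec b))
   = mk_VCl (mk_cl 0 0 0 ((- (q^8) + 2*q^6 - 2*q^4 + 1) / (q^2 * u)) 0 0 0 0)
       (mk_cl ((- (2*q^6) + 4*q^4 - 2*q^2) * cc / u) 0 0 0 0 ((2*q^6 - 3*q^4 + 2*q^2 + 1) / u) 0 0)
       (mk_cl 0 0 0 0 0 0 ((- (2*q^4) + 2*q^2) / u) 0)"
  "(\<Sum>b\<in>UNIV. sc (dual_eigvec b (Vz,True,True,False) * q powi (- eig_exp b)) (eigvec b))
   = mk_VCl
       (mk_cl ((- (q^6) - q^4 + q^2 + 1) * cc / (q * u)) 0 0 0 0
          ((q^6 + q^4 - q^2 - 1) / (q * u)) 0 0)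
       (mk_cl 0 0 0 0 0 0 ((2*q^2) / u) 0) (mk_cl 0 0 0 0 0 0 0 0)"
  "(\<Sum>b\<in>UNIV. sc (dual_eigvec b (Vz,True,True,True) * q powi (- eig_exp b)) (eigvec b))
   = mk_VCl (mk_cl 0 ((- (q^10) + q^8 - 2*q^4 + q^2 + 1) * cc / (q^3 * u)) 0 0 0 0 0 0)
       (mk_cl 0 0 ((- (2*q^6) + 4*q^4 - 2*q^2) * cc / u) 0 0 0 0 1)
       (mk_cl 0 0 0 0 ((- (2*q^5) + 2*q) * cc / u) 0 0 0)"
  "(\<Sum>b\<in>UNIV. sc (dual_eigvec b (Vm,False,False,False) * q powi (- eig_exp b)) (eigvec b))
   = mk_VCl (mk_cl 0 0 0 0 0 0 0 0) (mk_cl 0 0 0 0 0 0 0 0) (mk_cl 1 0 0 0 0 0 0 0)"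
  "(\<Sum>b\<in>UNIV. sc (dual_eigvec b (Vm,False,False,True) * q powi (- eig_exp b)) (eigvec b))
   = mk_VCl (mk_cl 0 0 0 0 0 0 0 0) (mk_cl 0 0 0 0 0 0 0 0) (mk_cl 0 (1 / q^2) 0 0 0 0 0 0)"
  "(\<Sum>b\<in>UNIV. sc (dual_eigvec b (Vm,False,True,False) * q powi (- eig_exp b)) (eigvec b))
   = mk_VCl (mk_cl 0 0 0 0 0 0 0 0) (mk_cl 0 ((- (q^4) + 1) / u) 0 0 0 0 0 0)
       (mk_cl 0 0 ((2*q^2) / u) 0 0 0 0 0)"
  "(\<Sum>b\<in>UNIV. sc (dual_eigvec b (Vm,False,True,True) * q powi (- eig_exp b)) (eigvec b))
   = mk_VCl (mk_cl 0 0 0 0 0 0 0 0) (mk_cl 0 0 0 0 0 0 0 0) (mk_cl 0 0 0 (1 / q^2) 0 0 0 0)"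
  "(\<Sum>b\<in>UNIV. sc (dual_eigvec b (Vm,True,False,False) * q powi (- eig_exp b)) (eigvec b))
   = mk_VCl (mk_cl 0 ((q^6 - 2*q^4 + q^2) / u) 0 0 0 0 0 0)
       (mk_cl 0 0 ((2*q^7 - 2*q^5) / (u * s)) 0 0 0 0 0)
       (mk_cl 0 0 0 0 ((2*q^4) / u) 0 0 0)"
  "(\<Sum>b\<in>UNIV. sc (dual_eigvec b (Vm,True,False,True) * q powi (- eig_exp b)) (eigvec b))
   = mk_VCl (mk_cl 0 0 0 0 0 0 0 0) (mk_cl 0 0 0 ((q^3 - q) / u) 0 0 0 0)
       (mk_cl ((q^4 - 2*q^2 + 1) * cc / u) 0 0 0 0 ((2*q^2) / u) 0 0)"
  "(\<Sum>b\<in>UNIV. sc (dual_eigvec b (Vm,True,True,False) * q powi (- eig_exp b)) (eigvec b))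
   = mk_VCl (mk_cl 0 0 0 ((q^6 - 2*q^4 + q^2) / u) 0 0 0 0)
       (mk_cl ((2*q^6 - 2*q^4) * cc / u) 0 0 0 0 ((- (2*q^6) + 2*q^4) / u) 0 0)
       (mk_cl 0 0 0 0 0 0 ((2*q^4) / u) 0)"
  "(\<Sum>b\<in>UNIV. sc (dual_eigvec b (Vm,True,True,True) * q powi (- eig_exp b)) (eigvec b))
   = mk_VCl (mk_cl 0 0 0 0 0 0 0 0) (mk_cl 0 ((q^4 - 1) * cc / u) 0 0 0 0 0 0)
       (mk_cl 0 0 ((q^4 - 2*q^2 + 1) * cc / u) 0 0 0 0 1)"
  by (simp add: sum_UNIV_gen_mon sum_UNIV_mon power_int_minus_divide mk_VCl_eq_iff mk_cl_eq_iff;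
      (simp add: field_simps)?; (simp only: s_def u_def t_def)?; (algebra)?)+

lemma double_braiding_inv_sqrt_coords [simp]:
  "double_braiding_inv_sqrt
     (mk_VCl (mk_cl a0 a1 a2 a3 a4 a5 a6 a7) (mk_cl b0 b1 b2 b3 b4 b5 b6 b7)
        (mk_cl c0 c1 c2 c3 c4 c5 c6 c7))
   = mk_VCl
       (mk_cl
          (a0
           + a5 * ((- (q^8) + q^6 + q^2 - 1) * cc / (q^2 * u))
           + b6 * ((- (q^6) - q^4 + q^2 + 1) * cc / (q * u)))
          (a1 * ((q^10 - q^8 + 2*q^6 - q^2 + 1) / (q^2 * u))
           + b2 * ((q^10 - q^8 + 2*q^4 - q^2 - 1) / (q^3 * u))
           + b7 * ((- (q^10) + q^8 - 2*q^4 + q^2 + 1) * cc / (q^3 * u))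
           + c4 * ((q^6 - 2*q^4 + q^2) / u))
          (a2 * ((q^8 + 1) / (q^2 * u))
           + a7 * ((- (q^8) + q^6 + q^2 - 1) * cc / (q^2 * u))
           + b4 * ((- (q^4) + 1) / u))
          (a3 * ((q^10 - q^8 + 2*q^6 - q^2 + 1) / (q^2 * u))
           + b5 * ((- (q^8) + 2*q^6 - 2*q^4 + 1) / (q^2 * u))
           + c6 * ((q^6 - 2*q^4 + q^2) / u))
          (a4 / q^2) (a5 * ((q^8 + 1) / (q^2 * u)) + b6 * ((q^6 + q^4 - q^2 - 1) / (q * u)))
          (a6 / q^2) a7)
       (mk_cl
          (a3 * ((q^8 - 2*q^6 + 2*q^4 - 1) * cc / u)
           + b0
           + b5 * ((- (2*q^6) + 4*q^4 - 2*q^2) * cc / u)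
           + c6 * ((2*q^6 - 2*q^4) * cc / u))
          (b1 * ((q^8 + 1) / (q^2 * u)) + c2 * ((- (q^4) + 1) / u) + c7 * ((q^4 - 1) * cc / u))
          (a1 * ((q^9 - 2*q^7 + 2*q^5 - q) / (u * s))
           + b2 * ((2*q^6 - 3*q^4 + 2*q^2 + 1) / u)
           + b7 * ((- (2*q^6) + 4*q^4 - 2*q^2) * cc / u)
           + c4 * ((2*q^7 - 2*q^5) / (u * s)))
          (b3 * ((q^8 + 1) / (q^2 * u)) + c5 * ((q^3 - q) / u))
          (a2 * ((- (q^4) + 1) / u) + a7 * ((q^4 - 1) * cc / u) + b4 * ((2*q^2) / u))
          (a3 * ((- (q^8) + 2*q^6 - 2*q^4 + 1) / u)
           + b5 * ((2*q^6 - 3*q^4 + 2*q^2 + 1) / u)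
           + c6 * ((- (2*q^6) + 2*q^4) / u))
          (a5 * ((q^3 - q) / u) + b6 * ((2*q^2) / u)) b7)
       (mk_cl
          (b3 * ((- (q^6) - q^4 + q^2 + 1) * cc / (q * u)) + c0 + c5 * ((q^4 - 2*q^2 + 1) * cc / u))
          (c1 / q^2)
          (b1 * ((- (q^4) + 1) / u) + c2 * ((2*q^2) / u) + c7 * ((q^4 - 2*q^2 + 1) * cc / u))
          (c3 / q^2)
          (a1 * ((q^6 - 2*q^4 + q^2) / u)
           + b2 * ((2*q^5 - 2*q) / u)
           + b7 * ((- (2*q^5) + 2*q) * cc / u)
           + c4 * ((2*q^4) / u))
          (b3 * ((q^6 + q^4 - q^2 - 1) / (q * u)) + c5 * ((2*q^2) / u))
          (a3 * ((q^6 - 2*q^4 + q^2) / u) + b5 * ((- (2*q^4) + 2*q^2) / u) + c6 * ((2*q^4) / u)) c7)"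
  unfolding double_braiding_inv_sqrt_def spectral_op_def linext_mk_VCl linext_mk_cl
  by (simp add: mk_VCl_eq_iff mk_cl_eq_iff;
      (simp add: field_simps)?; (simp only: s_def u_def t_def)?; (algebra)?)

section \<open>Cartan's formula\<close>

lemma iota_coords [simp]:
  "iota q cc (mk_V x0 x1 x2) (mk_cl a0 a1 a2 a3 a4 a5 a6 a7)
   = mk_cl
       (x0 * a1 * cc
        + x1 * a2 * ((q^2 + 1) * cc / q^3)
        + x1 * a7 * ((q^4 - 1) * cc^2 / q^3)
        + x2 * a4 * (cc / q^2))
       (x1 * a3 * ((q^2 + 1) * cc / q) + x2 * a5 * (cc / q^2))
       (x0 * a3 * (- cc) + x1 * a5 * ((- (q^2) + 1) * cc / q^2) + x2 * a6 * cc) (x2 * a7 * cc)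
       (x0 * a5 * (- cc) + x1 * a6 * ((- (q^2) - 1) * cc / q^3))
       (x1 * a7 * ((- (q^2) - 1) * cc / q)) (x0 * a7 * cc) 0"
  unfolding iota_def nsigma_VCl_def inv_sqrt_double_braiding
  by (simp add: cl_structure_defs coords_simps linext_mk_ClV tens_mk_V even_part_mk_cl
        odd_part_mk_cl mult_ClV_mk_ClV mk_cl_eq_iff;
      (simp add: field_simps)?; (simp only: s_def u_def t_def)?; (algebra)?)

lemma cartan_formula_coords:
  "Lie q cc (mk_V x0 x1 x2) (mk_cl a0 a1 a2 a3 a4 a5 a6 a7) =
   iota q cc (mk_V x0 x1 x2) (dCl q cc (mk_cl a0 a1 a2 a3 a4 a5 a6 a7))
   + dCl q cc (iota q cc (mk_V x0 x1 x2) (mk_cl a0 a1 a2 a3 a4 a5 a6 a7))"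
  by (simp add: mk_cl_eq_iff; (simp add: field_simps)?; (algebra)?)

lemma cartan_formula: "Lie q cc x w = iota q cc x (dCl q cc w) + dCl q cc (iota q cc x w)"
  by (induct x rule: V_cases, induct w rule: cl_cases) (rule cartan_formula_coords)

lemma dCl_dCl: "dCl q cc (dCl q cc w) = 0"
  by (induct w rule: cl_cases) (simp add: zero_cl_eq_mk_cl)

lemma dCl_add: "dCl q cc (v + w) = dCl q cc v + dCl q cc w"
  by (induct v rule: cl_cases, induct w rule: cl_cases) (simp add: mk_cl_eq_iff field_simps)

lemma iota_zero: "iota q cc x 0 = 0"
  by (induct x rule: V_cases) (simp add: zero_cl_eq_mk_cl)

end

theorem mainTheorem5:
  fixes q cc :: complex
  assumes "q \<noteq> 0"
    and "\<forall>n::nat. n > 0 \<longrightarrow> q ^ n \<noteq> 1"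
    and "cc \<noteq> 0"
  shows "(\<forall>x w. Lie q cc x w = iota q cc x (dCl q cc w) + dCl q cc (iota q cc x w))
       \<and> (\<forall>x w. dCl q cc (Lie q cc x w) = Lie q cc x (dCl q cc w))
       \<and> (\<forall>x w. dCl q cc w = 0 \<longrightarrow> Lie q cc x w = dCl q cc (iota q cc x w))"
proof -
  interpret clq_params q cc "q^2 + 1" "q^4 + 1" "q^4 + q^2 + 1"
    using assms by unfold_locales auto
  have homotopy_consequences:
    "dCl q cc (Lie q cc x w) = Lie q cc x (dCl q cc w)"
    "dCl q cc w = 0 \<Longrightarrow> Lie q cc x w = dCl q cc (iota q cc x w)" for x w
    using homotopy_formula_consequences[where L = "Lie q cc x" and i = "iota q cc x"
        and d = "dCl q cc", OF cartan_formula dCl_add dCl_dCl iota_zero] by blast+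
  show ?thesis
    using cartan_formula homotopy_consequences by blast
qed

end
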